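(* Let $M$ be a smooth manifold of even dimension $n$, $G$ a Lorentzian metric on $M$, $B$ a 2-form on $M$ whose component matrix $(B_{ij})$ is everywhere invertible, and $\phi$ a smooth function. Let $H=dB$, $H_{abc}=\partial_aB_{bc}+\partial_bB_{ca}+\partial_cB_{ab}$, indices of $H$ raised with $G^{ab}$, and $R$ the scalar curvature of $G$. Define $\beta^{ij}$ as the inverse matrix of $B$ ($B_{ij}\beta^{jk}=\delta_i^k$), $\hat g^{ij}=\beta^{im}\beta^{jn}G_{mn}$ with inverse $\hat g_{ij}$, $D^a=\beta^{ab}\partial_b$, $\Theta^{abc}=\beta^{am}\partial_m\beta^{bc}+\beta^{bm}\partial_m\beta^{ca}+\beta^{cm}\partial_m\beta^{ab}$ with indices lowered by $\hat g_{ab}$, and $\hat R$ the scalar built from $(\hat g,\beta)$ as in the context. Then, pointwise on $M$, $$\sqrt{-\det(G_{ab})}\,e^{-2\phi}\Bigl(R-\tfrac1{12}H_{abc}H^{abc}+4G^{ab}\partial_a\phi\,\partial_b\phi\Bigr)=\sqrt{-\det(\hat g^{ab})}\,\det(\beta^{-1})\,e^{-2\phi}\Bigl(\hat R-\tfrac1{12}\Theta^{abc}\Theta_{abc}+4\hat g_{ab}D^a\phi\,D^b\phi\Bigr),$$ where $\det(\beta^{-1})=\det(B_{ab})$. In particular the bosonic action $S=\frac1{2\kappa^2}\int d^nx\sqrt{-|G|}e^{-2\phi}(R-\frac1{12}H^2+4(\partial\phi)^2)$ and the action $\hat S=\frac1{2\kappa^2}\int d^nx\sqrt{-|\hat g|}\,|\beta^{-1}|\,e^{-2\phi}(\hat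 R-\frac1{12}\Theta^2+4\hat g_{ab}D^a\phi D^b\phi)$ coincide under this field redefinition.
   Context: With $\beta_{ab}$ the inverse of $\beta^{ab}$ (i.e. $\beta_{ab}=B_{ab}$): $\mathcal Q_c{}^{ab}=\partial_c\beta^{ab}+\Theta^{abn}\beta_{nc}$; $\hat\Gamma_c{}^{ab}=\tfrac12\hat g_{cm}(D^a\hat g^{bm}+D^b\hat g^{am}-D^m\hat g^{ab})-\tfrac12\hat g_{cm}(\hat g^{an}\mathcal Q_n{}^{bm}+\hat g^{bn}\mathcal Q_n{}^{am})+\tfrac12\mathcal Q_c{}^{ab}$; $\hat R_a{}^{bcd}=D^c\hat\Gamma_a{}^{db}-D^d\hat\Gamma_a{}^{cb}+\hat\Gamma_a{}^{cm}\hat\Gamma_m{}^{db}-\hat\Gamma_a{}^{dm}\hat\Gamma_m{}^{cb}-\hat\Gamma_a{}^{mb}\mathcal Q_m{}^{cd}$; $\hat R^{ab}=\hat R_m{}^{amb}$; $\hat R=\hat g_{ab}\hat R^{ab}$. *)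

theory Defs
  imports "HOL-Analysis.Analysis"
begin

text \<open>Local-coordinate setting: fields are functions on an open coordinate domain
  U of real^'n; matrix-valued fields have type real^'n^'n (entry A $ i $ j).\<close>

type_synonym 'n field = "real^'n \<Rightarrow> real"
type_synonym 'n mfield = "real^'n \<Rightarrow> real^'n^'n"

definition pd :: "'n::finite \<Rightarrow> 'n field \<Rightarrow> real^'n \<Rightarrow> real" where
  "pd i f x = frechet_derivative f (at x) (axis i 1)"

definition pdk :: "'n::finite list \<Rightarrow> 'n field \<Rightarrow> 'n field" where
  "pdk is f = foldr pd is f"

definition smooth_on :: "(real^'n::finite) set \<Rightarrow> 'n field \<Rightarrow> bool" where
  "smooth_on U f \<longleftrightarrow> (\<forall>is. pdk is f differentiable_on U)"

definition lorentzian :: "real^'n::finite^'n \<Rightarrow> bool" where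
  "lorentzian A \<longleftrightarrow> transpose A = A \<and>
     (\<exists>(P::real^'n^'n) i0. invertible P \<and>
        transpose P ** A ** P = (\<chi> i j. if i = j then (if i = i0 then -1 else 1) else 0))"

definition Ginv :: "'n::finite mfield \<Rightarrow> 'n mfield" where
  "Ginv G x = matrix_inv (G x)"

definition christoffel :: "'n::finite mfield \<Rightarrow> 'n \<Rightarrow> 'n \<Rightarrow> 'n \<Rightarrow> 'n field" where
  "christoffel G a b c x = (1/2) * (\<Sum>d\<in>UNIV. Ginv G x $ a $ d *
      (pd b (\<lambda>y. G y $ d $ c) x + pd c (\<lambda>y. G y $ d $ b) x - pd d (\<lambda>y. G y $ b $ c) x))"

definition riemann :: "'n::finite mfield \<Rightarrow> 'n \<Rightarrow> 'n \<Rightarrow> 'n \<Rightarrow> 'n \<Rightarrow> 'n field" where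
  "riemann G a b c d x = pd c (christoffel G a d b) x - pd d (christoffel G a c b) x
     + (\<Sum>e\<in>UNIV. christoffel G a c e x * christoffel G e d b x
                 - christoffel G a d e x * christoffel G e c b x)"

definition ricci :: "'n::finite mfield \<Rightarrow> 'n \<Rightarrow> 'n \<Rightarrow> 'n field" where
  "ricci G b d x = (\<Sum>a\<in>UNIV. riemann G a b a d x)"

definition scalar_curv :: "'n::finite mfield \<Rightarrow> 'n field" where
  "scalar_curv G x = (\<Sum>b\<in>UNIV. \<Sum>d\<in>UNIV. Ginv G x $ b $ d * ricci G b d x)"

definition Hlow :: "'n::finite mfield \<Rightarrow> 'n \<Rightarrow> 'n \<Rightarrow> 'n \<Rightarrow> 'n field" where
  "Hlow B a b c x = pd a (\<lambda>y. B y $ b $ c) x + pd b (\<lambda>y. B y $ c $ a) x + pd c (\<lambda>y. B y $ a $ b) x"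

definition Hup :: "'n::finite mfield \<Rightarrow> 'n mfield \<Rightarrow> 'n \<Rightarrow> 'n \<Rightarrow> 'n \<Rightarrow> 'n field" where
  "Hup G B a b c x = (\<Sum>a'\<in>UNIV. \<Sum>b'\<in>UNIV. \<Sum>c'\<in>UNIV.
     Ginv G x $ a $ a' * Ginv G x $ b $ b' * Ginv G x $ c $ c' * Hlow B a' b' c' x)"

definition Hsq :: "'n::finite mfield \<Rightarrow> 'n mfield \<Rightarrow> 'n field" where
  "Hsq G B x = (\<Sum>a\<in>UNIV. \<Sum>b\<in>UNIV. \<Sum>c\<in>UNIV. Hlow B a b c x * Hup G B a b c x)"

definition beta :: "'n::finite mfield \<Rightarrow> 'n mfield" where
  "beta B x = matrix_inv (B x)"

definition ghat_up :: "'n::finite mfield \<Rightarrow> 'n mfield \<Rightarrow> 'n mfield" where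
  "ghat_up G B x = (\<chi> i j. \<Sum>m\<in>UNIV. \<Sum>n\<in>UNIV. beta B x $ i $ m * beta B x $ j $ n * G x $ m $ n)"

definition ghat_low :: "'n::finite mfield \<Rightarrow> 'n mfield \<Rightarrow> 'n mfield" where
  "ghat_low G B x = matrix_inv (ghat_up G B x)"

definition Dop :: "'n::finite mfield \<Rightarrow> 'n \<Rightarrow> 'n field \<Rightarrow> 'n field" where
  "Dop B a f x = (\<Sum>b\<in>UNIV. beta B x $ a $ b * pd b f x)"

definition Theta_up :: "'n::finite mfield \<Rightarrow> 'n \<Rightarrow> 'n \<Rightarrow> 'n \<Rightarrow> 'n field" where
  "Theta_up B a b c x = (\<Sum>m\<in>UNIV.
      beta B x $ a $ m * pd m (\<lambda>y. beta B y $ b $ c) x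
    + beta B x $ b $ m * pd m (\<lambda>y. beta B y $ c $ a) x
    + beta B x $ c $ m * pd m (\<lambda>y. beta B y $ a $ b) x)"

definition Theta_low :: "'n::finite mfield \<Rightarrow> 'n mfield \<Rightarrow> 'n \<Rightarrow> 'n \<Rightarrow> 'n \<Rightarrow> 'n field" where
  "Theta_low G B a b c x = (\<Sum>a'\<in>UNIV. \<Sum>b'\<in>UNIV. \<Sum>c'\<in>UNIV.
     ghat_low G B x $ a $ a' * ghat_low G B x $ b $ b' * ghat_low G B x $ c $ c' * Theta_up B a' b' c' x)"

definition Theta_sq :: "'n::finite mfield \<Rightarrow> 'n mfield \<Rightarrow> 'n field" where
  "Theta_sq G B x = (\<Sum>a\<in>UNIV. \<Sum>b\<in>UNIV. \<Sum>c\<in>UNIV. Theta_up B a b c x * Theta_low G B a b c x)"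

text \<open>Q_c^{ab} = d_c beta^{ab} + Theta^{abn} beta_{nc}, with beta_{nc} = B_{nc}\<close>
definition Qf :: "'n::finite mfield \<Rightarrow> 'n \<Rightarrow> 'n \<Rightarrow> 'n \<Rightarrow> 'n field" where
  "Qf B c a b x = pd c (\<lambda>y. beta B y $ a $ b) x + (\<Sum>n\<in>UNIV. Theta_up B a b n x * B x $ n $ c)"

definition Gamma_hat :: "'n::finite mfield \<Rightarrow> 'n mfield \<Rightarrow> 'n \<Rightarrow> 'n \<Rightarrow> 'n \<Rightarrow> 'n field" where
  "Gamma_hat G B c a b x =
     (1/2) * (\<Sum>m\<in>UNIV. ghat_low G B x $ c $ m *
        (Dop B a (\<lambda>y. ghat_up G B y $ b $ m) x + Dop B b (\<lambda>y. ghat_up G B y $ a $ m) x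
         - Dop B m (\<lambda>y. ghat_up G B y $ a $ b) x))
   - (1/2) * (\<Sum>m\<in>UNIV. \<Sum>n\<in>UNIV. ghat_low G B x $ c $ m *
        (ghat_up G B x $ a $ n * Qf B n b m x + ghat_up G B x $ b $ n * Qf B n a m x))
   + (1/2) * Qf B c a b x"

definition R_hat4 :: "'n::finite mfield \<Rightarrow> 'n mfield \<Rightarrow> 'n \<Rightarrow> 'n \<Rightarrow> 'n \<Rightarrow> 'n \<Rightarrow> 'n field" where
  "R_hat4 G B a b c d x =
     Dop B c (Gamma_hat G B a d b) x - Dop B d (Gamma_hat G B a c b) x
   + (\<Sum>m\<in>UNIV. Gamma_hat G B a c m x * Gamma_hat G B m d b x
               - Gamma_hat G B a d m x * Gamma_hat G B m c b x
               - Gamma_hat G B a m b x * Qf B m c d x)"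

definition R_hat2 :: "'n::finite mfield \<Rightarrow> 'n mfield \<Rightarrow> 'n \<Rightarrow> 'n \<Rightarrow> 'n field" where
  "R_hat2 G B a b x = (\<Sum>m\<in>UNIV. R_hat4 G B m a m b x)"

definition R_hat :: "'n::finite mfield \<Rightarrow> 'n mfield \<Rightarrow> 'n field" where
  "R_hat G B x = (\<Sum>a\<in>UNIV. \<Sum>b\<in>UNIV. ghat_low G B x $ a $ b * R_hat2 G B a b x)"

end

theory Submission
  imports Defs
begin

text \<open>The vector fields \<open>\<beta>\<^sup>a = \<beta>\<^sup>a\<^sup>b \<partial>\<^sub>b\<close> form a frame on \<open>U\<close>, and every
  hatted quantity is the corresponding quantity of \<open>G\<close> written in this frame: \<open>ghat\<^sup>a\<^sup>b\<close> is
  \<open>G(\<beta>\<^sup>a, \<beta>\<^sup>b)\<close>, \<open>Q\<close> is the torsion of the frame (its anholonomy), and by the Koszul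
  formula \<open>Gamma_hat\<close> is the Levi-Civita connection of \<open>G\<close> in the frame. Hence \<open>R_hat\<close>
  is the Riemann tensor of \<open>G\<close> transported by \<open>\<beta>\<close> and \<open>B\<close>, and \<open>R_hat = R\<close>.
  Likewise \<open>\<Theta>\<^sup>a\<^sup>b\<^sup>c = \<beta>\<^sup>a\<^sup>i \<beta>\<^sup>b\<^sup>j \<beta>\<^sup>c\<^sup>k H\<^sub>i\<^sub>j\<^sub>k\<close>, so \<open>\<Theta>\<^sup>2 = H\<^sup>2\<close>, and the dilaton terms agree.
  Finally \<open>det ghat = (det \<beta>)\<^sup>2 det G\<close> and \<open>det B > 0\<close> for an invertible skew matrix,
  so the densities agree.\<close>

section \<open>Partial derivatives of coordinate fields\<close>

lemma pd_cong_open: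
  assumes "open U" "x \<in> U" "\<And>y. y \<in> U \<Longrightarrow> f y = g y"
  shows "pd i f x = pd i g x"
proof -
  have "(f has_derivative D) (at x) \<longleftrightarrow> (g has_derivative D) (at x)" for D
    using has_derivative_transform_within_open[OF _ assms(1,2)] assms(3) by metis
  then show ?thesis
    by (simp add: pd_def frechet_derivative_def)
qed

lemma differentiable_cong_open:
  assumes "open U" "x \<in> U" "\<And>y. y \<in> U \<Longrightarrow> f y = g y" "g differentiable at x"
  shows "f differentiable at x"
  using assms has_derivative_transform_within_open unfolding differentiable_def by metis

lemma pd_has_derivative: "(f has_derivative D) (at x) \<Longrightarrow> pd i f x = D (axis i 1)"
  by (metis frechet_derivative_at pd_def)

lemma pd_add:
  assumes "f differentiable at x" "g differentiable at x"
  shows "pd i (\<lambda>y. f y + g y) x = pd i f x + pd i g x"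
  using pd_has_derivative[OF has_derivative_add[OF assms[unfolded frechet_derivative_works]]]
  by (simp add: pd_def)

lemma pd_minus:
  assumes "f differentiable at x"
  shows "pd i (\<lambda>y. - f y) x = - pd i f x"
  using pd_has_derivative[OF has_derivative_minus[OF assms[unfolded frechet_derivative_works]]]
  by (simp add: pd_def)

lemma pd_mult:
  fixes f g :: "'n::finite field"
  assumes "f differentiable at x" "g differentiable at x"
  shows "pd i (\<lambda>y. f y * g y) x = f x * pd i g x + pd i f x * g x"
  using pd_has_derivative[OF has_derivative_mult[OF assms[unfolded frechet_derivative_works]]]
  by (simp add: pd_def)

lemma pd_const [simp]: "pd i (\<lambda>y. c) x = 0"
  by (simp add: pd_def)

lemma pd_sum:
  assumes "finite A" "\<And>a. a \<in> A \<Longrightarrow> f a differentiable at x"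
  shows "pd i (\<lambda>y. \<Sum>a\<in>A. f a y) x = (\<Sum>a\<in>A. pd i (f a) x)"
  using assms
proof (induction A rule: finite_induct)
  case (insert a A)
  then have "pd i (\<lambda>y. f a y + (\<Sum>a\<in>A. f a y)) x = pd i (f a) x + pd i (\<lambda>y. \<Sum>a\<in>A. f a y) x"
    by (intro pd_add) auto
  with insert show ?case by simp
qed simp

lemma differentiable_prod:
  fixes f :: "'a \<Rightarrow> 'n::finite field"
  shows "finite A \<Longrightarrow> (\<And>a. a \<in> A \<Longrightarrow> f a differentiable at x) \<Longrightarrow>
    (\<lambda>y. \<Prod>a\<in>A. f a y) differentiable at x"
  by (induction A rule: finite_induct) auto

lemma differentiable_det:
  fixes M :: "'n::finite mfield"
  assumes "\<And>i j. (\<lambda>y. M y $ i $ j) differentiable at x"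
  shows "(\<lambda>y. det (M y)) differentiable at x"
  unfolding det_def
  by (intro differentiable_sum ballI differentiable_mult differentiable_const differentiable_prod)
     (auto intro: assms)

lemma continuous_on_det:
  fixes M :: "real \<Rightarrow> real^'n::finite^'n"
  assumes "\<And>i j. continuous_on S (\<lambda>y. M y $ i $ j)"
  shows "continuous_on S (\<lambda>y. det (M y))"
  unfolding det_def
  by (intro continuous_on_sum continuous_on_mult continuous_on_const continuous_on_prod) (auto intro: assms)

lemma smooth_on_differentiable:
  assumes "smooth_on U f" "open U" "y \<in> U"
  shows "f differentiable at y" "pd k f differentiable at y"
proof -
  have "pdk [] f differentiable_on U" "pdk [k] f differentiable_on U"
    using assms(1) unfolding smooth_on_def by blast+
  then show "f differentiable at y" "pd k f differentiable at y"
    using differentiable_on_eq_differentiable_at[OF assms(2)] assms(3) by (auto simp: pdk_def)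
qed

subsection \<open>Symmetry of second partial derivatives\<close>

lemma has_real_derivative_along_line:
  fixes f :: "'n::finite field"
  assumes "f differentiable at (a + t *\<^sub>R v)"
  shows "((\<lambda>s. f (a + s *\<^sub>R v)) has_real_derivative frechet_derivative f (at (a + t *\<^sub>R v)) v) (at t)"
proof -
  let ?D = "frechet_derivative f (at (a + t *\<^sub>R v))"
  have line: "((\<lambda>s. a + s *\<^sub>R v) has_derivative (\<lambda>s. s *\<^sub>R v)) (at t)"
    by (auto intro!: derivative_eq_intros)
  have f: "(f has_derivative ?D) (at (a + t *\<^sub>R v))"
    using assms by (simp add: frechet_derivative_works)
  then have lin: "linear ?D" by (rule has_derivative_linear)
  have "((\<lambda>s. f (a + s *\<^sub>R v)) has_derivative (\<lambda>s. ?D (s *\<^sub>R v))) (at t)"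
    using diff_chain_at[OF line f] by (simp add: o_def)
  then show ?thesis
    by (rule has_derivative_imp_has_field_derivative) (simp add: linear_cmul[OF lin])
qed

lemma second_difference_mvt:
  fixes f :: "'n::finite field"
  assumes h: "0 < h"
    and diff: "\<And>s t. 0 \<le> s \<Longrightarrow> s \<le> h \<Longrightarrow> 0 \<le> t \<Longrightarrow> t \<le> h \<Longrightarrow>
      f differentiable at (x + t *\<^sub>R axis k 1 + s *\<^sub>R axis l 1)"
  obtains \<theta> where "0 < \<theta>" "\<theta> < h"
    "f (x + h *\<^sub>R axis k 1 + h *\<^sub>R axis l 1) - f (x + h *\<^sub>R axis k 1) - f (x + h *\<^sub>R axis l 1) + f x
       = h * (pd k f (x + h *\<^sub>R axis l 1 + \<theta> *\<^sub>R axis k 1) - pd k f (x + \<theta> *\<^sub>R axis k 1))"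
proof -
  let ?ek = "axis k 1 :: real^'n" and ?el = "axis l 1 :: real^'n"
  define \<phi> where "\<phi> t = f ((x + h *\<^sub>R ?el) + t *\<^sub>R ?ek) - f (x + t *\<^sub>R ?ek)" for t
  define \<phi>' where "\<phi>' t = pd k f ((x + h *\<^sub>R ?el) + t *\<^sub>R ?ek) - pd k f (x + t *\<^sub>R ?ek)" for t
  have "DERIV \<phi> t :> \<phi>' t" if "0 \<le> t" "t \<le> h" for t
  proof -
    have "f differentiable at ((x + h *\<^sub>R ?el) + t *\<^sub>R ?ek)"
      using diff[of h t] that h by (simp add: algebra_simps)
    moreover have "f differentiable at (x + t *\<^sub>R ?ek)"
      using diff[of 0 t] that h by simp
    ultimately show ?thesis
      unfolding \<phi>_def \<phi>'_def pd_def by (intro DERIV_diff has_real_derivative_along_line)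
  qed
  then obtain \<theta> where "0 < \<theta>" "\<theta> < h" "\<phi> h - \<phi> 0 = (h - 0) * \<phi>' \<theta>"
    using MVT2[of 0 h \<phi> \<phi>'] h by auto
  then show ?thesis
    by (intro that[of \<theta>]) (auto simp: \<phi>_def \<phi>'_def algebra_simps)
qed

lemma second_difference_approx:
  fixes f :: "'n::finite field"
  assumes U: "open U" "x \<in> U" and fd: "\<And>y. y \<in> U \<Longrightarrow> f differentiable at y"
    and gd: "pd k f differentiable at x" and e: "e > 0"
  shows "\<exists>d>0. \<forall>h. 0 < h \<and> h < d \<longrightarrow>
     \<bar>(f (x + h *\<^sub>R axis k 1 + h *\<^sub>R axis l 1) - f (x + h *\<^sub>R axis k 1) - f (x + h *\<^sub>R axis l 1) + f x)
        - h^2 * pd l (pd k f) x\<bar> \<le> 3 * e * h^2"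
proof -
  let ?ek = "axis k 1 :: real^'n" and ?el = "axis l 1 :: real^'n" and ?g = "pd k f"
  obtain r where r: "r > 0" "ball x r \<subseteq> U" using U open_contains_ball by blast
  define Dg where "Dg = frechet_derivative ?g (at x)"
  have Dg: "(?g has_derivative Dg) (at x)" using gd by (simp add: Dg_def frechet_derivative_works)
  have lin: "linear Dg" using Dg has_derivative_linear by blast
  obtain d1 where d1: "d1 > 0"
    "\<And>z. norm (z - x) < d1 \<Longrightarrow> \<bar>?g z - ?g x - Dg (z - x)\<bar> \<le> e * norm (z - x)"
    using Dg e unfolding has_derivative_at_alt by force
  have "\<bar>(f (x + h *\<^sub>R ?ek + h *\<^sub>R ?el) - f (x + h *\<^sub>R ?ek) - f (x + h *\<^sub>R ?el) + f x)
        - h^2 * pd l ?g x\<bar> \<le> 3 * e * h^2" if h: "0 < h" "h < min d1 r / 2" for h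
  proof -
    have inU: "x + t *\<^sub>R ?ek + s *\<^sub>R ?el \<in> U" if "0 \<le> t" "t \<le> h" "0 \<le> s" "s \<le> h" for s t
    proof -
      have "norm (t *\<^sub>R ?ek + s *\<^sub>R ?el) < r"
        using norm_triangle_ineq[of "t *\<^sub>R ?ek" "s *\<^sub>R ?el"] that h by simp
      then have "x + (t *\<^sub>R ?ek + s *\<^sub>R ?el) \<in> ball x r"
        by (simp add: dist_norm norm_minus_commute add.commute)
      then show ?thesis
        using r by (auto simp: add.assoc)
    qed
    then obtain \<theta> where th: "0 < \<theta>" "\<theta> < h" and \<Delta>:
      "f (x + h *\<^sub>R ?ek + h *\<^sub>R ?el) - f (x + h *\<^sub>R ?ek) - f (x + h *\<^sub>R ?el) + f x
         = h * (?g (x + h *\<^sub>R ?el + \<theta> *\<^sub>R ?ek) - ?g (x + \<theta> *\<^sub>R ?ek))"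
      using second_difference_mvt[OF h(1), of f x k l] fd[OF inU] by blast
    define z1 where "z1 = x + h *\<^sub>R ?el + \<theta> *\<^sub>R ?ek"
    define z2 where "z2 = x + \<theta> *\<^sub>R ?ek"
    have n1: "norm (z1 - x) \<le> 2 * h"
      using norm_triangle_ineq[of "h *\<^sub>R ?el" "\<theta> *\<^sub>R ?ek"] th h by (simp add: z1_def)
    have "\<bar>?g z1 - ?g x - Dg (z1 - x)\<bar> \<le> e * norm (z1 - x)"
      using n1 h by (intro d1(2)) simp
    also have "\<dots> \<le> e * (2 * h)" using n1 e by simp
    finally have r1: "\<bar>?g z1 - ?g x - Dg (z1 - x)\<bar> \<le> e * (2 * h)" .
    have n2: "norm (z2 - x) \<le> h" using th by (simp add: z2_def)
    have "\<bar>?g z2 - ?g x - Dg (z2 - x)\<bar> \<le> e * norm (z2 - x)"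
      using n2 h by (intro d1(2)) simp
    also have "\<dots> \<le> e * h" using n2 e by simp
    finally have r2: "\<bar>?g z2 - ?g x - Dg (z2 - x)\<bar> \<le> e * h" .
    have "Dg (z1 - x) - Dg (z2 - x) = h * pd l ?g x"
      using pd_has_derivative[OF Dg]
      by (simp add: z1_def z2_def linear_add[OF lin] linear_cmul[OF lin])
    then have "\<bar>(?g z1 - ?g z2) - h * pd l ?g x\<bar> \<le> 3 * e * h"
      using r1 r2 by linarith
    then have "h * \<bar>(?g z1 - ?g z2) - h * pd l ?g x\<bar> \<le> h * (3 * e * h)"
      using h by (simp add: mult_left_mono)
    moreover have "h * \<bar>(?g z1 - ?g z2) - h * pd l ?g x\<bar>
        = \<bar>h * (?g z1 - ?g z2) - h^2 * pd l ?g x\<bar>"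
    proof -
      have "h * (?g z1 - ?g z2) - h^2 * pd l ?g x = h * ((?g z1 - ?g z2) - h * pd l ?g x)"
        by (simp add: power2_eq_square algebra_simps)
      then show ?thesis using h by (simp add: abs_mult)
    qed
    ultimately show ?thesis
      unfolding \<Delta> z1_def z2_def by (simp add: power2_eq_square mult_ac)
  qed
  moreover have "min d1 r / 2 > 0" using d1 r by simp
  ultimately show ?thesis by blast
qed

lemma pd_pd_swap:
  fixes f :: "'n::finite field"
  assumes U: "open U" "x \<in> U" and fd: "\<And>y. y \<in> U \<Longrightarrow> f differentiable at y"
    and gd: "\<And>k. pd k f differentiable at x"
  shows "pd i (pd j f) x = pd j (pd i f) x"
proof -
  let ?ei = "axis i 1 :: real^'n" and ?ej = "axis j 1 :: real^'n"
  have key: "\<bar>pd j (pd i f) x - pd i (pd j f) x\<bar> \<le> 6 * e" if e: "e > 0" for e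
  proof -
    obtain d1 where d1: "d1 > 0" "\<And>h. 0 < h \<and> h < d1 \<Longrightarrow>
     \<bar>(f (x + h *\<^sub>R ?ei + h *\<^sub>R ?ej) - f (x + h *\<^sub>R ?ei) - f (x + h *\<^sub>R ?ej) + f x)
        - h^2 * pd j (pd i f) x\<bar> \<le> 3 * e * h^2"
      using second_difference_approx[OF U fd gd e, of i j] by blast
    obtain d2 where d2: "d2 > 0" "\<And>h. 0 < h \<and> h < d2 \<Longrightarrow>
     \<bar>(f (x + h *\<^sub>R ?ej + h *\<^sub>R ?ei) - f (x + h *\<^sub>R ?ej) - f (x + h *\<^sub>R ?ei) + f x)
        - h^2 * pd i (pd j f) x\<bar> \<le> 3 * e * h^2"
      using second_difference_approx[OF U fd gd e, of j i] by blast
    define h where "h = min d1 d2 / 2"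
    have h: "0 < h" "h < d1" "h < d2" using d1 d2 by (auto simp: h_def)
    have "x + h *\<^sub>R ?ej + h *\<^sub>R ?ei = x + h *\<^sub>R ?ei + h *\<^sub>R ?ej" by (simp add: algebra_simps)
    then have "\<bar>h^2 * (pd j (pd i f) x - pd i (pd j f) x)\<bar> \<le> 6 * e * h^2"
      using d1(2)[of h] d2(2)[of h] h by (simp add: algebra_simps abs_le_iff)
    then have "h^2 * \<bar>pd j (pd i f) x - pd i (pd j f) x\<bar> \<le> h^2 * (6 * e)"
      by (simp add: abs_mult mult_ac)
    then show ?thesis using h by simp
  qed
  then have "\<bar>pd j (pd i f) x - pd i (pd j f) x\<bar> \<le> 0 + e" if "e > 0" for e
    using key[of "e / 6"] that by simp
  then show ?thesis
    using field_le_epsilon[of "\<bar>pd j (pd i f) x - pd i (pd j f) x\<bar>" 0] by simp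
qed

section \<open>Matrices\<close>

lemma sum_delta_mult [simp]:
  fixes X :: "'n::finite \<Rightarrow> real"
  shows "(\<Sum>p\<in>UNIV. (if i = p then 1 else 0) * X p) = X i"
    and "(\<Sum>p\<in>UNIV. (if p = i then 1 else 0) * X p) = X i"
    and "(\<Sum>p\<in>UNIV. X p * (if p = i then 1 else 0)) = X i"
    and "(\<Sum>p\<in>UNIV. X p * (if i = p then 1 else 0)) = X i"
  by (simp_all add: if_distrib if_distribR cong: if_cong)

lemma matrix_mul_nth: "(A ** C) $ i $ j = (\<Sum>k\<in>UNIV. A $ i $ k * C $ k $ j)"
  by (simp add: matrix_matrix_mult_def)

lemma matrix_inv_mult:
  fixes A :: "real^'n::finite^'n"
  assumes "invertible A"
  shows matrix_inv_right: "A ** matrix_inv A = mat 1"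
    and matrix_inv_left: "matrix_inv A ** A = mat 1"
  using assms unfolding invertible_def matrix_inv_def by (rule someI2_ex; auto)+

lemma sum_matrix_inv_right:
  fixes A :: "real^'n::finite^'n"
  assumes "invertible A"
  shows "(\<Sum>k\<in>UNIV. A $ i $ k * matrix_inv A $ k $ j) = (if i = j then 1 else 0)"
  using arg_cong[OF matrix_inv_right[OF assms], of "\<lambda>M. M $ i $ j"]
  by (simp add: matrix_matrix_mult_def mat_def)

lemma sum_matrix_inv_left:
  fixes A :: "real^'n::finite^'n"
  assumes "invertible A"
  shows "(\<Sum>k\<in>UNIV. matrix_inv A $ i $ k * A $ k $ j) = (if i = j then 1 else 0)"
  using arg_cong[OF matrix_inv_left[OF assms], of "\<lambda>M. M $ i $ j"]
  by (simp add: matrix_matrix_mult_def mat_def)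

lemma matrix_inv_unique_right:
  fixes A N :: "real^'n::finite^'n"
  assumes "invertible A" "A ** N = mat 1"
  shows "matrix_inv A = N"
  using matrix_inv_left[OF assms(1)]
  by (metis assms(2) matrix_mul_assoc matrix_mul_lid matrix_mul_rid)

lemma matrix_inv_cramer:
  fixes A :: "real^'n::finite^'n"
  assumes "invertible A"
  shows "matrix_inv A $ i $ j = det (\<chi> r s. if s = i then (if r = j then 1 else 0) else A$r$s) / det A"
proof -
  have "A *v (matrix_inv A *v axis j 1) = axis j 1"
    by (simp add: matrix_vector_mul_assoc matrix_inv_right[OF assms])
  then have "matrix_inv A *v axis j 1 = (\<chi> k. det (\<chi> r s. if s=k then axis j 1$r else A$r$s) / det A)"
    using cramer[of A] assms invertible_det_nz by blast
  moreover have "(matrix_inv A *v axis j 1) $ i = matrix_inv A $ i $ j"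
    by (simp add: matrix_vector_mult_def axis_def if_distrib cong: if_cong)
  moreover have "(\<chi> r s. if s=i then axis j 1$r else A$r$s) = (\<chi> r s. if s = i then (if r = j then 1 else 0) else A$r$s)"
    by (auto simp: axis_def vec_eq_iff)
  ultimately show ?thesis by simp
qed

lemma differentiable_matrix_inv:
  fixes M :: "'n::finite mfield"
  assumes "open U" "x \<in> U" "\<And>y. y \<in> U \<Longrightarrow> invertible (M y)"
    "\<And>i j. (\<lambda>y. M y $ i $ j) differentiable at x"
  shows "(\<lambda>y. matrix_inv (M y) $ i $ j) differentiable at x"
proof (rule differentiable_cong_open[OF assms(1,2)])
  show "matrix_inv (M y) $ i $ j = det (\<chi> r s. if s = i then (if r = j then 1 else 0) else M y$r$s) / det (M y)"
    if "y \<in> U" for y using matrix_inv_cramer[OF assms(3)[OF that]] .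
  have "det (M x) \<noteq> 0" using assms(2,3) invertible_det_nz by blast
  moreover have "(\<lambda>y. if c then a else M y $ r $ s) differentiable at x" for c a r s
    using assms(4) by (cases c) auto
  ultimately show "(\<lambda>y. det (\<chi> r s. if s = i then (if r = j then 1 else 0) else M y$r$s) / det (M y)) differentiable at x"
    by (intro differentiable_divide differentiable_det) (auto intro: assms(4))
qed

lemma pd_matrix_inv:
  fixes M :: "'n::finite mfield"
  assumes U: "open U" "x \<in> U" and inv: "\<And>y. y \<in> U \<Longrightarrow> invertible (M y)"
    and M_diff: "\<And>i j. (\<lambda>y. M y $ i $ j) differentiable at x"
  shows "pd k (\<lambda>y. matrix_inv (M y) $ i $ j) x =
     - (\<Sum>p\<in>UNIV. \<Sum>q\<in>UNIV. matrix_inv (M x) $ i $ p * pd k (\<lambda>y. M y $ p $ q) x * matrix_inv (M x) $ q $ j)"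
proof -
  let ?I = "\<lambda>y. matrix_inv (M y)"
  have diff_inv: "(\<lambda>y. ?I y $ i $ j) differentiable at x" for i j
    using differentiable_matrix_inv[OF assms] .
  \<comment> \<open>differentiate the constant entries of \<open>M ** matrix_inv M = 1\<close>\<close>
  have deriv_one: "(\<Sum>p\<in>UNIV. M x $a$p * pd k (\<lambda>y. ?I y $p$j) x + pd k (\<lambda>y. M y $a$p) x * ?I x $p$j) = 0" for a
  proof -
    have "pd k (\<lambda>y. \<Sum>p\<in>UNIV. M y $a$p * ?I y $p$j) x = pd k (\<lambda>y. if a = j then 1 else 0) x"
      by (rule pd_cong_open[OF U]) (simp add: sum_matrix_inv_right[OF inv])
    moreover have "pd k (\<lambda>y. \<Sum>p\<in>UNIV. M y $a$p * ?I y $p$j) x =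
       (\<Sum>p\<in>UNIV. M x $a$p * pd k (\<lambda>y. ?I y $p$j) x + pd k (\<lambda>y. M y $a$p) x * ?I x $p$j)"
      by (subst pd_sum) (auto intro!: sum.cong pd_mult differentiable_mult M_diff diff_inv)
    ultimately show ?thesis by simp
  qed
  have contract: "(\<Sum>a\<in>UNIV. ?I x $i$a * (\<Sum>p\<in>UNIV. M x $a$p * pd k (\<lambda>y. ?I y $p$j) x))
      = pd k (\<lambda>y. ?I y $i$j) x"
  proof -
    have "(\<Sum>a\<in>UNIV. ?I x $i$a * (\<Sum>p\<in>UNIV. M x $a$p * pd k (\<lambda>y. ?I y $p$j) x))
        = (\<Sum>p\<in>UNIV. (\<Sum>a\<in>UNIV. ?I x $i$a * M x $a$p) * pd k (\<lambda>y. ?I y $p$j) x)"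
      by (simp add: sum_distrib_left sum_distrib_right mult.assoc) (rule sum.swap)
    then show ?thesis by (simp add: sum_matrix_inv_left[OF inv[OF U(2)]])
  qed
  have "0 = (\<Sum>a\<in>UNIV. ?I x $i$a *
      (\<Sum>p\<in>UNIV. M x $a$p * pd k (\<lambda>y. ?I y $p$j) x + pd k (\<lambda>y. M y $a$p) x * ?I x $p$j))"
    by (simp only: deriv_one) simp
  also have "\<dots> = (\<Sum>a\<in>UNIV. ?I x $i$a * (\<Sum>p\<in>UNIV. M x $a$p * pd k (\<lambda>y. ?I y $p$j) x))
      + (\<Sum>a\<in>UNIV. \<Sum>p\<in>UNIV. ?I x $i$a * pd k (\<lambda>y. M y $a$p) x * ?I x $p$j)"
    by (simp add: sum.distrib distrib_left sum_distrib_left mult.assoc)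
  finally show ?thesis unfolding contract by linarith
qed

lemma skew_quadratic_form_eq_0:
  fixes A :: "real^'n::finite^'n"
  assumes skew: "\<And>a b. A $ a $ b = - A $ b $ a"
  shows "(\<Sum>i\<in>UNIV. \<Sum>j\<in>UNIV. v $ i * A $ i $ j * v $ j) = 0"
proof -
  let ?Q = "\<Sum>i\<in>UNIV. \<Sum>j\<in>UNIV. v $ i * A $ i $ j * v $ j"
  have "?Q = (\<Sum>j\<in>UNIV. \<Sum>i\<in>UNIV. v $ i * A $ i $ j * v $ j)"
    by (rule sum.swap)
  also have "\<dots> = (\<Sum>j\<in>UNIV. \<Sum>i\<in>UNIV. - (v $ j * A $ j $ i * v $ i))"
    by (intro sum.cong refl) (subst skew, simp)
  also have "\<dots> = - ?Q" by (simp add: sum_negf)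
  finally show ?thesis by simp
qed

text \<open>The path \<open>(1 - s) I + s A\<close> consists of invertible matrices, since the skew part
  does not contribute to \<open>v \<bullet> M v\<close>; so \<open>det\<close> cannot change sign along it.
  (Invertibility of \<open>A\<close> alone forces the dimension to be even.)\<close>

lemma det_pos_if_skew_invertible:
  fixes A :: "real^'n::finite^'n"
  assumes skew: "\<And>a b. A $ a $ b = - A $ b $ a" and inv: "invertible A"
  shows "det A > 0"
proof -
  define M where "M s = ((\<chi> i j. (1 - s) * (if i = j then 1 else 0) + s * A $ i $ j) :: real^'n^'n)" for s :: real
  have cont: "continuous_on {0..1} (\<lambda>s. det (M s))"
    unfolding M_def by (rule continuous_on_det) (simp only: vec_lambda_beta, intro continuous_intros)
  have M0: "det (M 0) = 1" unfolding M_def by (simp add: mat_def[symmetric])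
  have M1: "M 1 = A" unfolding M_def by (simp add: vec_eq_iff)
  have "det (M s) \<noteq> 0" if s: "0 \<le> s" "s \<le> 1" for s
  proof (cases "s = 1")
    case True
    then show ?thesis using M1 inv invertible_det_nz by auto
  next
    case False
    have "v = 0" if Mv: "M s *v v = 0" for v
    proof -
      have "(M s *v v) $ i = (1 - s) * v $ i + s * (\<Sum>j\<in>UNIV. A $ i $ j * v $ j)" for i
      proof -
        have "(M s *v v) $ i = (\<Sum>j\<in>UNIV. (if i = j then (1 - s) * v $ j else 0) + s * (A $ i $ j * v $ j))"
          unfolding M_def matrix_vector_mult_def vec_lambda_beta
          by (intro sum.cong refl) (simp add: algebra_simps)
        also have "\<dots> = (1 - s) * v $ i + s * (\<Sum>j\<in>UNIV. A $ i $ j * v $ j)"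
          by (simp add: sum.distrib sum_distrib_left)
        finally show ?thesis .
      qed
      then have "(\<Sum>i\<in>UNIV. v $ i * (M s *v v) $ i) =
          (1 - s) * (\<Sum>i\<in>UNIV. v $ i * v $ i) + s * (\<Sum>i\<in>UNIV. \<Sum>j\<in>UNIV. v $ i * A $ i $ j * v $ j)"
        by (simp add: distrib_left sum.distrib sum_distrib_left mult_ac)
      then have "(\<Sum>i\<in>UNIV. v $ i * v $ i) = 0"
        using Mv skew_quadratic_form_eq_0[OF skew, of v] s False by simp
      then show "v = 0"
        by (simp add: vec_eq_iff sum_nonneg_eq_0_iff)
    qed
    then have "inj ((*v) (M s))" by (simp add: linear_injective_0 matrix_vector_mul_linear)
    then show ?thesis
      using det_nz_iff_inj[OF matrix_vector_mul_linear[of "M s"]] by (simp add: matrix_of_matrix_vector_mul)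
  qed
  moreover have "\<exists>s. 0 \<le> s \<and> s \<le> 1 \<and> det (M s) = 0" if "det (M 1) \<le> 0"
    using IVT2'[of "\<lambda>s. det (M s)" 1 0 0] cont M0 that by auto
  ultimately show ?thesis
    using M1 by fastforce
qed

lemma lorentzian_symmetric:
  assumes "lorentzian A"
  shows "A $ a $ b = A $ b $ a"
proof -
  have "transpose A $ b $ a = A $ b $ a"
    using assms by (simp add: lorentzian_def)
  then show ?thesis by (simp add: transpose_def)
qed

lemma lorentzian_invertible:
  fixes A :: "real^'n::finite^'n"
  assumes "lorentzian A"
  shows "invertible A"
proof -
  obtain P :: "real^'n^'n" and i0 where
    P: "transpose P ** A ** P = (\<chi> i j. if i = j then (if i = i0 then -1 else 1) else 0)"
    using assms unfolding lorentzian_def by blast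
  have "det ((\<chi> i j. if i = j then (if i = i0 then -1 else 1) else 0) :: real^'n^'n) = -1"
    by (subst det_diagonal) (auto simp: prod.If_cases Int_absorb1)
  moreover have "det (transpose P ** A ** P) = det P * det A * det P"
    by (simp add: det_mul)
  ultimately have "det P * det A * det P = -1"
    unfolding P by simp
  then have "det A \<noteq> 0" by auto
  then show ?thesis using invertible_det_nz by blast
qed

lemma sum_rotate3: "(\<Sum>p\<in>(UNIV::'a::finite set). \<Sum>k\<in>(UNIV::'b::finite set). \<Sum>l\<in>(UNIV::'c::finite set). f p k l :: real)
   = (\<Sum>k\<in>UNIV. \<Sum>l\<in>UNIV. \<Sum>p\<in>UNIV. f p k l)"
proof -
  have "(\<Sum>p\<in>UNIV. \<Sum>k\<in>UNIV. \<Sum>l\<in>UNIV. f p k l) = (\<Sum>k\<in>UNIV. \<Sum>p\<in>UNIV. \<Sum>l\<in>UNIV. f p k l)"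
    by (rule sum.swap)
  also have "\<dots> = (\<Sum>k\<in>UNIV. \<Sum>l\<in>UNIV. \<Sum>p\<in>UNIV. f p k l)"
    by (intro sum.cong refl sum.swap)
  finally show ?thesis .
qed

lemma sum_rotate4: "(\<Sum>p\<in>(UNIV::'a::finite set). \<Sum>k\<in>(UNIV::'b::finite set). \<Sum>l\<in>(UNIV::'c::finite set). \<Sum>s\<in>(UNIV::'d::finite set). f p k l s :: real)
   = (\<Sum>k\<in>UNIV. \<Sum>l\<in>UNIV. \<Sum>s\<in>UNIV. \<Sum>p\<in>UNIV. f p k l s)"
proof -
  have "(\<Sum>p\<in>UNIV. \<Sum>k\<in>UNIV. \<Sum>l\<in>UNIV. \<Sum>s\<in>UNIV. f p k l s) = (\<Sum>k\<in>UNIV. \<Sum>l\<in>UNIV. \<Sum>p\<in>UNIV. \<Sum>s\<in>UNIV. f p k l s)"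
    by (rule sum_rotate3)
  also have "\<dots> = (\<Sum>k\<in>UNIV. \<Sum>l\<in>UNIV. \<Sum>s\<in>UNIV. \<Sum>p\<in>UNIV. f p k l s)"
    by (intro sum.cong refl sum.swap)
  finally show ?thesis .
qed

lemma sum_swap_pairs: "(\<Sum>a\<in>(UNIV::'a::finite set). \<Sum>b\<in>(UNIV::'b::finite set). \<Sum>i\<in>(UNIV::'c::finite set). \<Sum>j\<in>(UNIV::'d::finite set). h a b i j :: real)
  = (\<Sum>i\<in>UNIV. \<Sum>j\<in>UNIV. \<Sum>a\<in>UNIV. \<Sum>b\<in>UNIV. h a b i j)"
proof -
  have "(\<Sum>a\<in>UNIV. \<Sum>b\<in>UNIV. \<Sum>i\<in>UNIV. \<Sum>j\<in>UNIV. h a b i j) = (\<Sum>a\<in>UNIV. \<Sum>i\<in>UNIV. \<Sum>j\<in>UNIV. \<Sum>b\<in>UNIV. h a b i j)"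
    by (intro sum.cong refl sum_rotate3)
  also have "\<dots> = (\<Sum>i\<in>UNIV. \<Sum>j\<in>UNIV. \<Sum>a\<in>UNIV. \<Sum>b\<in>UNIV. h a b i j)"
    by (rule sum_rotate3)
  finally show ?thesis .
qed

lemma sum_swap_triples: "(\<Sum>a\<in>(UNIV::'a::finite set). \<Sum>b\<in>(UNIV::'a set). \<Sum>c\<in>(UNIV::'a set).
     \<Sum>i\<in>(UNIV::'b::finite set). \<Sum>j\<in>(UNIV::'b set). \<Sum>k\<in>(UNIV::'b set). h a b c i j k :: real)
  = (\<Sum>i\<in>UNIV. \<Sum>j\<in>UNIV. \<Sum>k\<in>UNIV. \<Sum>a\<in>UNIV. \<Sum>b\<in>UNIV. \<Sum>c\<in>UNIV. h a b c i j k)"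
proof -
  have "(\<Sum>a\<in>UNIV. \<Sum>b\<in>UNIV. \<Sum>c\<in>UNIV. \<Sum>i\<in>UNIV. \<Sum>j\<in>UNIV. \<Sum>k\<in>UNIV. h a b c i j k)
      = (\<Sum>a\<in>UNIV. \<Sum>b\<in>UNIV. \<Sum>i\<in>UNIV. \<Sum>j\<in>UNIV. \<Sum>k\<in>UNIV. \<Sum>c\<in>UNIV. h a b c i j k)"
    by (intro sum.cong refl sum_rotate4)
  also have "\<dots> = (\<Sum>a\<in>UNIV. \<Sum>i\<in>UNIV. \<Sum>j\<in>UNIV. \<Sum>k\<in>UNIV. \<Sum>b\<in>UNIV. \<Sum>c\<in>UNIV. h a b c i j k)"
    by (intro sum.cong refl sum_rotate4)
  also have "\<dots> = (\<Sum>i\<in>UNIV. \<Sum>j\<in>UNIV. \<Sum>k\<in>UNIV. \<Sum>a\<in>UNIV. \<Sum>b\<in>UNIV. \<Sum>c\<in>UNIV. h a b c i j k)"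
    by (rule sum_rotate4)
  finally show ?thesis .
qed

lemma sum_trilinear_swap:
  fixes f :: "'a::finite \<Rightarrow> 'a \<Rightarrow> 'a \<Rightarrow> real" and X Y Z :: "'a \<Rightarrow> 'b::finite \<Rightarrow> real"
  shows "(\<Sum>a\<in>UNIV. \<Sum>b\<in>UNIV. \<Sum>c\<in>UNIV. f a b c * (\<Sum>i\<in>UNIV. \<Sum>j\<in>UNIV. \<Sum>k\<in>UNIV. X a i * Y b j * Z c k * g i j k))
    = (\<Sum>i\<in>UNIV. \<Sum>j\<in>UNIV. \<Sum>k\<in>UNIV. g i j k * (\<Sum>a\<in>UNIV. \<Sum>b\<in>UNIV. \<Sum>c\<in>UNIV. f a b c * X a i * Y b j * Z c k))"
proof -
  have "(\<Sum>a\<in>UNIV. \<Sum>b\<in>UNIV. \<Sum>c\<in>UNIV. f a b c * (\<Sum>i\<in>UNIV. \<Sum>j\<in>UNIV. \<Sum>k\<in>UNIV. X a i * Y b j * Z c k * g i j k))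
    = (\<Sum>a\<in>UNIV. \<Sum>b\<in>UNIV. \<Sum>c\<in>UNIV. \<Sum>i\<in>UNIV. \<Sum>j\<in>UNIV. \<Sum>k\<in>UNIV. f a b c * X a i * Y b j * Z c k * g i j k)"
    by (simp add: sum_distrib_left mult_ac)
  also have "\<dots> = (\<Sum>i\<in>UNIV. \<Sum>j\<in>UNIV. \<Sum>k\<in>UNIV. \<Sum>a\<in>UNIV. \<Sum>b\<in>UNIV. \<Sum>c\<in>UNIV. f a b c * X a i * Y b j * Z c k * g i j k)"
    by (rule sum_swap_triples)
  also have "\<dots> = (\<Sum>i\<in>UNIV. \<Sum>j\<in>UNIV. \<Sum>k\<in>UNIV. g i j k * (\<Sum>a\<in>UNIV. \<Sum>b\<in>UNIV. \<Sum>c\<in>UNIV. f a b c * X a i * Y b j * Z c k))"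
    by (simp add: sum_distrib_left mult_ac)
  finally show ?thesis .
qed

lemma sum_product3: "(\<Sum>a\<in>UNIV. \<Sum>b\<in>UNIV. \<Sum>c\<in>UNIV. (p a * q b * r c :: real)) = (\<Sum>a\<in>UNIV. p a) * (\<Sum>b\<in>UNIV. q b) * (\<Sum>c\<in>UNIV. r c)"
proof -
  have "(\<Sum>a\<in>UNIV. \<Sum>b\<in>UNIV. \<Sum>c\<in>UNIV. (p a * q b * r c :: real)) = (\<Sum>a\<in>UNIV. p a * (\<Sum>b\<in>UNIV. q b * (\<Sum>c\<in>UNIV. r c)))"
    by (simp add: sum_distrib_left mult.assoc)
  also have "\<dots> = (\<Sum>a\<in>UNIV. p a) * ((\<Sum>b\<in>UNIV. q b) * (\<Sum>c\<in>UNIV. r c))"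
    by (simp only: sum_distrib_right[symmetric])
  finally show ?thesis by (simp add: mult.assoc)
qed

lemma tensor3_contraction_congruence:
  fixes P M N :: "'n::finite \<Rightarrow> 'n \<Rightarrow> real" and S T T' :: "'n \<Rightarrow> 'n \<Rightarrow> 'n \<Rightarrow> real"
  assumes T: "\<And>a b c. T a b c = (\<Sum>i\<in>UNIV. \<Sum>j\<in>UNIV. \<Sum>k\<in>UNIV. P a i * P b j * P c k * S i j k)"
    and T': "\<And>a b c. T' a b c = (\<Sum>a'\<in>UNIV. \<Sum>b'\<in>UNIV. \<Sum>c'\<in>UNIV. M a a' * M b b' * M c c' * T a' b' c')"
    and N: "\<And>i i'. (\<Sum>a\<in>UNIV. \<Sum>a'\<in>UNIV. P a i * M a a' * P a' i') = N i i'"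
  shows "(\<Sum>a\<in>UNIV. \<Sum>b\<in>UNIV. \<Sum>c\<in>UNIV. T a b c * T' a b c)
    = (\<Sum>i\<in>UNIV. \<Sum>j\<in>UNIV. \<Sum>k\<in>UNIV. S i j k * (\<Sum>i'\<in>UNIV. \<Sum>j'\<in>UNIV. \<Sum>k'\<in>UNIV. N i i' * N j j' * N k k' * S i' j' k'))"
proof -
  define K where "K a' i = (\<Sum>a\<in>UNIV. P a i * M a a')" for a' i
  have inner: "(\<Sum>a\<in>UNIV. \<Sum>b\<in>UNIV. \<Sum>c\<in>UNIV. T' a b c * P a i * P b j * P c k)
     = (\<Sum>i'\<in>UNIV. \<Sum>j'\<in>UNIV. \<Sum>k'\<in>UNIV. N i i' * N j j' * N k k' * S i' j' k')" for i j k
  proof -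
    have "(\<Sum>a\<in>UNIV. \<Sum>b\<in>UNIV. \<Sum>c\<in>UNIV. T' a b c * P a i * P b j * P c k)
      = (\<Sum>a\<in>UNIV. \<Sum>b\<in>UNIV. \<Sum>c\<in>UNIV. (P a i * P b j * P c k) * (\<Sum>a'\<in>UNIV. \<Sum>b'\<in>UNIV. \<Sum>c'\<in>UNIV. M a a' * M b b' * M c c' * T a' b' c'))"
      by (simp add: T' mult_ac)
    also have "\<dots> = (\<Sum>a'\<in>UNIV. \<Sum>b'\<in>UNIV. \<Sum>c'\<in>UNIV. T a' b' c' * (\<Sum>a\<in>UNIV. \<Sum>b\<in>UNIV. \<Sum>c\<in>UNIV. (P a i * P b j * P c k) * M a a' * M b b' * M c c'))"
      by (rule sum_trilinear_swap)
    also have "\<dots> = (\<Sum>a'\<in>UNIV. \<Sum>b'\<in>UNIV. \<Sum>c'\<in>UNIV. (K a' i * K b' j * K c' k) * T a' b' c')"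
    proof (intro sum.cong refl)
      fix a' b' c'
      have "(\<Sum>a\<in>UNIV. \<Sum>b\<in>UNIV. \<Sum>c\<in>UNIV. (P a i * P b j * P c k) * M a a' * M b b' * M c c')
        = (\<Sum>a\<in>UNIV. \<Sum>b\<in>UNIV. \<Sum>c\<in>UNIV. (P a i * M a a') * (P b j * M b b') * (P c k * M c c'))"
        by (simp add: mult_ac)
      also have "\<dots> = K a' i * K b' j * K c' k" unfolding K_def by (rule sum_product3)
      finally show "T a' b' c' * (\<Sum>a\<in>UNIV. \<Sum>b\<in>UNIV. \<Sum>c\<in>UNIV. (P a i * P b j * P c k) * M a a' * M b b' * M c c')
          = (K a' i * K b' j * K c' k) * T a' b' c'" by simp
    qed
    also have "\<dots> = (\<Sum>a'\<in>UNIV. \<Sum>b'\<in>UNIV. \<Sum>c'\<in>UNIV. (K a' i * K b' j * K c' k) *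
        (\<Sum>i'\<in>UNIV. \<Sum>j'\<in>UNIV. \<Sum>k'\<in>UNIV. P a' i' * P b' j' * P c' k' * S i' j' k'))"
      by (simp only: T)
    also have "\<dots> = (\<Sum>i'\<in>UNIV. \<Sum>j'\<in>UNIV. \<Sum>k'\<in>UNIV. S i' j' k' * (\<Sum>a'\<in>UNIV. \<Sum>b'\<in>UNIV. \<Sum>c'\<in>UNIV. (K a' i * K b' j * K c' k) * P a' i' * P b' j' * P c' k'))"
      by (rule sum_trilinear_swap)
    also have "\<dots> = (\<Sum>i'\<in>UNIV. \<Sum>j'\<in>UNIV. \<Sum>k'\<in>UNIV. N i i' * N j j' * N k k' * S i' j' k')"
    proof (intro sum.cong refl)
      fix i' j' k'
      have NK: "(\<Sum>a'\<in>UNIV. K a' i * P a' i') = N i i'" for i i'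
        unfolding K_def N[symmetric] by (simp add: sum_distrib_right) (rule sum.swap)
      have "(\<Sum>a'\<in>UNIV. \<Sum>b'\<in>UNIV. \<Sum>c'\<in>UNIV. (K a' i * K b' j * K c' k) * P a' i' * P b' j' * P c' k')
        = (\<Sum>a'\<in>UNIV. \<Sum>b'\<in>UNIV. \<Sum>c'\<in>UNIV. (K a' i * P a' i') * (K b' j * P b' j') * (K c' k * P c' k'))"
        by (simp add: mult_ac)
      also have "\<dots> = N i i' * N j j' * N k k'" unfolding sum_product3 NK ..
      finally show "S i' j' k' * (\<Sum>a'\<in>UNIV. \<Sum>b'\<in>UNIV. \<Sum>c'\<in>UNIV. (K a' i * K b' j * K c' k) * P a' i' * P b' j' * P c' k')
         = N i i' * N j j' * N k k' * S i' j' k'" by simp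
    qed
    finally show ?thesis .
  qed
  have "(\<Sum>a\<in>UNIV. \<Sum>b\<in>UNIV. \<Sum>c\<in>UNIV. T a b c * T' a b c)
     = (\<Sum>a\<in>UNIV. \<Sum>b\<in>UNIV. \<Sum>c\<in>UNIV. T' a b c * (\<Sum>i\<in>UNIV. \<Sum>j\<in>UNIV. \<Sum>k\<in>UNIV. P a i * P b j * P c k * S i j k))"
    by (simp add: T mult.commute)
  also have "\<dots> = (\<Sum>i\<in>UNIV. \<Sum>j\<in>UNIV. \<Sum>k\<in>UNIV. S i j k * (\<Sum>a\<in>UNIV. \<Sum>b\<in>UNIV. \<Sum>c\<in>UNIV. T' a b c * P a i * P b j * P c k))"
    by (rule sum_trilinear_swap)
  also have "\<dots> = (\<Sum>i\<in>UNIV. \<Sum>j\<in>UNIV. \<Sum>k\<in>UNIV. S i j k * (\<Sum>i'\<in>UNIV. \<Sum>j'\<in>UNIV. \<Sum>k'\<in>UNIV. N i i' * N j j' * N k k' * S i' j' k'))"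
    by (simp only: inner)
  finally show ?thesis .
qed

lemma sum_inverse_contract_sym:
  fixes gu gl :: "'n::finite \<Rightarrow> 'n \<Rightarrow> real"
  assumes inv: "\<And>c n. (\<Sum>m\<in>UNIV. gl c m * gu m n) = (if c = n then 1 else 0)"
    and sym: "\<And>a b. gu a b = gu b a"
  shows "(\<Sum>m\<in>UNIV. gl c m * (\<Sum>k\<in>UNIV. F k * gu k m)) = F c"
proof -
  have "(\<Sum>m\<in>UNIV. gl c m * (\<Sum>k\<in>UNIV. F k * gu k m)) = (\<Sum>m\<in>UNIV. \<Sum>k\<in>UNIV. F k * (gl c m * gu m k))"
    by (simp add: sum_distrib_left sym mult.commute mult.left_commute)
  also have "\<dots> = (\<Sum>k\<in>UNIV. \<Sum>m\<in>UNIV. F k * (gl c m * gu m k))" by (rule sum.swap)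
  also have "\<dots> = (\<Sum>k\<in>UNIV. F k * (if c = k then 1 else 0))" by (simp add: sum_distrib_left[symmetric] inv)
  also have "\<dots> = F c" by simp
  finally show ?thesis .
qed

lemma koszul_formula:
  fixes gu gl :: "'n::finite \<Rightarrow> 'n \<Rightarrow> real" and Dg X Q :: "'n \<Rightarrow> 'n \<Rightarrow> 'n \<Rightarrow> real"
  assumes inv: "\<And>c n. (\<Sum>m\<in>UNIV. gl c m * gu m n) = (if c = n then 1 else 0)"
    and sym: "\<And>a b. gu a b = gu b a"
    and metric: "\<And>a b c. Dg a b c = (\<Sum>m\<in>UNIV. X m a b * gu m c + X m a c * gu b m)"
    and torsion: "\<And>c a b. X c a b - X c b a = Q c a b"
  shows "(1/2) * (\<Sum>m\<in>UNIV. gl c m * (Dg a b m + Dg b a m - Dg m a b))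
     - (1/2) * (\<Sum>m\<in>UNIV. \<Sum>n\<in>UNIV. gl c m * (gu a n * Q n b m + gu b n * Q n a m))
     + (1/2) * Q c a b = X c a b"
proof -
  have koszul_sum: "Dg a b m + Dg b a m - Dg m a b = (\<Sum>k\<in>UNIV. (2 * X k a b) * gu k m) - (\<Sum>k\<in>UNIV. Q k a b * gu k m)
      + (\<Sum>k\<in>UNIV. gu a k * Q k b m + gu b k * Q k a m)" for m
  proof -
    have "Dg a b m + Dg b a m - Dg m a b = (\<Sum>k\<in>UNIV. (X k a b * gu k m + X k a m * gu b k)
       + (X k b a * gu k m + X k b m * gu a k) - (X k m a * gu k b + X k m b * gu a k))"
      unfolding metric by (simp add: sum.distrib sum_subtractf)
    also have "\<dots> = (\<Sum>k\<in>UNIV. (2 * X k a b) * gu k m - Q k a b * gu k m + (gu a k * Q k b m + gu b k * Q k a m))"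
    proof (rule sum.cong[OF refl])
      fix k
      have t1: "X k b a = X k a b - Q k a b" using torsion[of k a b] by simp
      have t2: "X k m a = X k a m - Q k a m" using torsion[of k a m] by simp
      have t3: "X k m b = X k b m - Q k b m" using torsion[of k b m] by simp
      have s1: "gu k b = gu b k" by (rule sym)
      show "(X k a b * gu k m + X k a m * gu b k) + (X k b a * gu k m + X k b m * gu a k)
          - (X k m a * gu k b + X k m b * gu a k) =
          (2 * X k a b) * gu k m - Q k a b * gu k m + (gu a k * Q k b m + gu b k * Q k a m)"
        unfolding t1 t2 t3 s1 by (simp add: algebra_simps)
    qed
    also have "\<dots> = (\<Sum>k\<in>UNIV. (2 * X k a b) * gu k m) - (\<Sum>k\<in>UNIV. Q k a b * gu k m)
      + (\<Sum>k\<in>UNIV. gu a k * Q k b m + gu b k * Q k a m)"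
      by (simp add: sum.distrib sum_subtractf)
    finally show ?thesis .
  qed
  have "(\<Sum>m\<in>UNIV. gl c m * (Dg a b m + Dg b a m - Dg m a b)) =
     (\<Sum>m\<in>UNIV. gl c m * (\<Sum>k\<in>UNIV. (2 * X k a b) * gu k m)) - (\<Sum>m\<in>UNIV. gl c m * (\<Sum>k\<in>UNIV. Q k a b * gu k m))
      + (\<Sum>m\<in>UNIV. \<Sum>n\<in>UNIV. gl c m * (gu a n * Q n b m + gu b n * Q n a m))"
    unfolding koszul_sum by (simp add: distrib_left right_diff_distrib sum.distrib sum_subtractf sum_distrib_left)
  also have "\<dots> = 2 * X c a b - Q c a b + (\<Sum>m\<in>UNIV. \<Sum>n\<in>UNIV. gl c m * (gu a n * Q n b m + gu b n * Q n a m))"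
    by (simp only: sum_inverse_contract_sym[OF inv sym])
  finally show ?thesis by linarith
qed

section \<open>The frame defined by a nondegenerate bivector\<close>

locale metric_bivector =
  fixes U :: "(real^'n::finite) set" and G B :: "real^'n \<Rightarrow> real^'n^'n"
  assumes open_U: "open U"
  and G_invertible: "\<And>y. y \<in> U \<Longrightarrow> invertible (G y)"
  and G_sym: "\<And>y a b. y \<in> U \<Longrightarrow> G y $ a $ b = G y $ b $ a"
  and G_differentiable: "\<And>y a b. y \<in> U \<Longrightarrow> (\<lambda>z. G z $ a $ b) differentiable at y"
  and G_pd_differentiable: "\<And>y a b k. y \<in> U \<Longrightarrow> pd k (\<lambda>z. G z $ a $ b) differentiable at y"
  and B_invertible: "\<And>y. y \<in> U \<Longrightarrow> invertible (B y)"
  and B_skew: "\<And>y a b. y \<in> U \<Longrightarrow> B y $ a $ b = - B y $ b $ a"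
  and B_differentiable: "\<And>y a b. y \<in> U \<Longrightarrow> (\<lambda>z. B z $ a $ b) differentiable at y"
  and B_pd_differentiable: "\<And>y a b k. y \<in> U \<Longrightarrow> pd k (\<lambda>z. B z $ a $ b) differentiable at y"
begin

abbreviation "\<beta> y i j \<equiv> beta B y $ i $ j"
abbreviation "Gc y i j \<equiv> G y $ i $ j"
abbreviation "Bc y i j \<equiv> B y $ i $ j"
abbreviation "Gi y i j \<equiv> Ginv G y $ i $ j"
abbreviation "d\<beta> k i j y \<equiv> pd k (\<lambda>z. beta B z $ i $ j) y"
abbreviation "dG k i j y \<equiv> pd k (\<lambda>z. G z $ i $ j) y"
abbreviation "dB k i j y \<equiv> pd k (\<lambda>z. B z $ i $ j) y"

lemma B_beta: "y \<in> U \<Longrightarrow> (\<Sum>k\<in>UNIV. B y$i$k * beta B y$k$j) = (if i = j then 1 else 0)"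
  unfolding beta_def by (rule sum_matrix_inv_right[OF B_invertible])
lemma beta_B: "y \<in> U \<Longrightarrow> (\<Sum>k\<in>UNIV. beta B y$i$k * B y$k$j) = (if i = j then 1 else 0)"
  unfolding beta_def by (rule sum_matrix_inv_left[OF B_invertible])
lemma G_Ginv: "y \<in> U \<Longrightarrow> (\<Sum>k\<in>UNIV. G y$i$k * Ginv G y$k$j) = (if i = j then 1 else 0)"
  unfolding Ginv_def by (rule sum_matrix_inv_right[OF G_invertible])
lemma beta_skew:
  assumes y: "y \<in> U"
  shows "beta B y $ i $ j = - beta B y $ j $ i"
proof -
  let ?b = "beta B y"
  let ?N = "(\<chi> i j. - ?b $ j $ i) :: real^'n^'n"
  have "B y ** ?N = mat 1"
  proof -
    have "(B y ** ?N) $ i $ j = mat 1 $ i $ j" for i j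
    proof -
      have "(B y ** ?N) $ i $ j = (\<Sum>k\<in>UNIV. ?b $ j $ k * B y $ k $ i)"
        unfolding matrix_matrix_mult_def by (auto intro!: sum.cong simp: B_skew[OF y, of i])
      also have "\<dots> = mat 1 $ i $ j" by (simp add: beta_B[OF y] mat_def)
      finally show ?thesis .
    qed
    then show ?thesis by (simp add: vec_eq_iff)
  qed
  then have "?b = ?N" unfolding beta_def by (rule matrix_inv_unique_right[OF B_invertible[OF y]])
  then show ?thesis by (metis vec_lambda_beta)
qed

lemma beta_differentiable: "y \<in> U \<Longrightarrow> (\<lambda>z. beta B z $ i $ j) differentiable at y"
  unfolding beta_def by (rule differentiable_matrix_inv[OF open_U _ B_invertible B_differentiable])

lemma Ginv_differentiable: "y \<in> U \<Longrightarrow> (\<lambda>z. Ginv G z $ i $ j) differentiable at y"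
  unfolding Ginv_def by (rule differentiable_matrix_inv[OF open_U _ G_invertible G_differentiable])

lemma pd_beta: "y \<in> U \<Longrightarrow> pd k (\<lambda>z. beta B z $ i $ j) y =
  - (\<Sum>p\<in>UNIV. \<Sum>q\<in>UNIV. beta B y $ i $ p * pd k (\<lambda>z. B z $ p $ q) y * beta B y $ q $ j)"
  unfolding beta_def by (rule pd_matrix_inv[OF open_U _ B_invertible B_differentiable])

lemma pd_beta_differentiable:
  assumes y: "y \<in> U"
  shows "pd k (\<lambda>z. beta B z $ i $ j) differentiable at y"
proof (rule differentiable_cong_open[OF open_U y])
  show "pd k (\<lambda>z. beta B z $ i $ j) z =
    - (\<Sum>p\<in>UNIV. \<Sum>q\<in>UNIV. beta B z $ i $ p * pd k (\<lambda>z. B z $ p $ q) z * beta B z $ q $ j)"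
    if "z \<in> U" for z using pd_beta[OF that] .
  show "(\<lambda>z. - (\<Sum>p\<in>UNIV. \<Sum>q\<in>UNIV. beta B z $ i $ p * pd k (\<lambda>z. B z $ p $ q) z * beta B z $ q $ j))
     differentiable at y"
    by (intro differentiable_minus differentiable_sum ballI finite differentiable_mult beta_differentiable[OF y] B_pd_differentiable[OF y])
qed

lemma pd_pd_beta_swap: "y \<in> U \<Longrightarrow> pd l (pd k (\<lambda>z. beta B z $ i $ j)) y = pd k (pd l (\<lambda>z. beta B z $ i $ j)) y"
  by (rule pd_pd_swap[OF open_U _ beta_differentiable pd_beta_differentiable])

lemma pd_beta_skew:
  assumes y: "y \<in> U"
  shows "pd k (\<lambda>z. beta B z $ i $ j) y = - pd k (\<lambda>z. beta B z $ j $ i) y"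
proof -
  have "pd k (\<lambda>z. beta B z $ i $ j) y = pd k (\<lambda>z. - beta B z $ j $ i) y"
    by (rule pd_cong_open[OF open_U y]) (rule beta_skew)
  also have "\<dots> = - pd k (\<lambda>z. beta B z $ j $ i) y" by (rule pd_minus[OF beta_differentiable[OF y]])
  finally show ?thesis .
qed

lemma pd_G_sym:
  assumes y: "y \<in> U"
  shows "pd k (\<lambda>z. G z $ a $ b) y = pd k (\<lambda>z. G z $ b $ a) y"
  by (rule pd_cong_open[OF open_U y]) (rule G_sym)

lemma christoffel_sym:
  assumes y: "y \<in> U"
  shows "christoffel G m k l y = christoffel G m l k y"
proof -
  have "pd k (\<lambda>y. G y $ d $ l) y + pd l (\<lambda>y. G y $ d $ k) y - pd d (\<lambda>y. G y $ k $ l) y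
      = pd l (\<lambda>y. G y $ d $ k) y + pd k (\<lambda>y. G y $ d $ l) y - pd d (\<lambda>y. G y $ l $ k) y" for d
    using pd_G_sym[OF y, of d k l] by simp
  note eq = this
  show ?thesis unfolding christoffel_def by (simp only: eq)
qed

lemma christoffel_differentiable:
  assumes y: "y \<in> U"
  shows "christoffel G a b c differentiable at y"
  unfolding christoffel_def[abs_def]
  by (intro differentiable_mult differentiable_const differentiable_sum ballI finite
      differentiable_add differentiable_diff Ginv_differentiable[OF y] G_pd_differentiable[OF y])


lemma ghat_up_entry: "ghat_up G B y $ i $ j = (\<Sum>m\<in>UNIV. \<Sum>n\<in>UNIV. beta B y $ i $ m * beta B y $ j $ n * G y $ m $ n)"
  by (simp add: ghat_up_def)

lemma ghat_up_eq_congruence: "ghat_up G B y = beta B y ** G y ** transpose (beta B y)"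
proof -
  have "ghat_up G B y $ i $ j = (beta B y ** G y ** transpose (beta B y)) $ i $ j" for i j
  proof -
    have "(beta B y ** G y ** transpose (beta B y)) $ i $ j
       = (\<Sum>n\<in>UNIV. \<Sum>m\<in>UNIV. beta B y $ i $ m * G y $ m $ n * beta B y $ j $ n)"
      by (simp add: matrix_mul_nth transpose_def sum_distrib_right)
    also have "\<dots> = (\<Sum>m\<in>UNIV. \<Sum>n\<in>UNIV. beta B y $ i $ m * G y $ m $ n * beta B y $ j $ n)"
      by (rule sum.swap)
    also have "\<dots> = ghat_up G B y $ i $ j"
      by (simp add: ghat_up_entry mult_ac)
    finally show ?thesis by simp
  qed
  then show ?thesis by (simp add: vec_eq_iff)
qed

lemma ghat_up_sym: "y \<in> U \<Longrightarrow> ghat_up G B y $ a $ b = ghat_up G B y $ b $ a"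
proof -
  assume y: "y \<in> U"
  have "ghat_up G B y $ a $ b = (\<Sum>m\<in>UNIV. \<Sum>n\<in>UNIV. beta B y $ a $ m * beta B y $ b $ n * G y $ m $ n)"
    by (rule ghat_up_entry)
  also have "\<dots> = (\<Sum>n\<in>UNIV. \<Sum>m\<in>UNIV. beta B y $ a $ m * beta B y $ b $ n * G y $ m $ n)"
    by (rule sum.swap)
  also have "\<dots> = ghat_up G B y $ b $ a"
    unfolding ghat_up_entry
  proof (intro sum.cong refl)
    fix m n show "beta B y $ a $ m * beta B y $ b $ n * G y $ m $ n = beta B y $ b $ n * beta B y $ a $ m * G y $ n $ m"
      using G_sym[OF y, of m n] by simp
  qed
  finally show ?thesis .
qed

lemma ghat_up_inverse:
  assumes y: "y \<in> U"
  shows "ghat_up G B y ** (transpose (B y) ** Ginv G y ** B y) = mat 1"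
proof -
  let ?b = "beta B y" and ?N = "transpose (B y) ** Ginv G y ** B y"
  have B_beta: "B y ** ?b = mat 1" unfolding beta_def using matrix_inv_mult[OF B_invertible[OF y]] by simp
  have beta_B: "?b ** B y = mat 1" unfolding beta_def using matrix_inv_mult[OF B_invertible[OF y]] by simp
  have GG: "G y ** Ginv G y = mat 1" unfolding Ginv_def using matrix_inv_mult[OF G_invertible[OF y]] by simp
  have tt: "transpose ?b ** transpose (B y) = mat 1"
    using B_beta by (metis matrix_transpose_mul transpose_mat)
  have "ghat_up G B y ** ?N = (?b ** G y) ** ((transpose ?b ** transpose (B y)) ** (Ginv G y ** B y))"
    unfolding ghat_up_eq_congruence by (simp add: matrix_mul_assoc)
  also have "\<dots> = ?b ** ((G y ** Ginv G y) ** B y)" unfolding tt by (simp add: matrix_mul_assoc)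
  also have "\<dots> = mat 1" unfolding GG using beta_B by simp
  finally show ?thesis .
qed

lemma ghat_up_invertible: "y \<in> U \<Longrightarrow> invertible (ghat_up G B y)"
  using ghat_up_inverse invertible_right_inverse by blast

lemma ghat_low_eq:
  assumes y: "y \<in> U"
  shows "ghat_low G B y = transpose (B y) ** Ginv G y ** B y"
  unfolding ghat_low_def by (rule matrix_inv_unique_right[OF ghat_up_invertible[OF y] ghat_up_inverse[OF y]])

lemma ghat_low_ghat_up: "y \<in> U \<Longrightarrow> (\<Sum>m\<in>UNIV. ghat_low G B y $ c $ m * ghat_up G B y $ m $ n) = (if c = n then 1 else 0)"
  unfolding ghat_low_def by (rule sum_matrix_inv_left[OF ghat_up_invertible])

text \<open>\<open>frame_conn a b p\<close> is the \<open>p\<close>-component of \<open>\<nabla>\<^bsub>\<beta>\<^sup>a\<^esub> \<beta>\<^sup>b\<close>, the Levi-Civita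
  derivative of the vector field \<open>\<beta>\<^sup>b = \<beta>\<^sup>b\<^sup>p \<partial>\<^sub>p\<close> along \<open>\<beta>\<^sup>a\<close>;
  \<open>pullback_conn\<close> turns \<open>p\<close> into a frame index with \<open>B\<close>.\<close>

definition D_beta :: "'n \<Rightarrow> 'n \<Rightarrow> 'n \<Rightarrow> 'n field" where
  "D_beta a b p y = (\<Sum>j\<in>UNIV. \<beta> y a j * d\<beta> j b p y)"
definition christoffel_low :: "'n \<Rightarrow> 'n \<Rightarrow> 'n \<Rightarrow> 'n field" where
  "christoffel_low s k l y = (1/2) * (dG k s l y + dG l s k y - dG s k l y)"
definition frame_conn :: "'n \<Rightarrow> 'n \<Rightarrow> 'n \<Rightarrow> 'n field" where
  "frame_conn a b p y = D_beta a b p y + (\<Sum>k\<in>UNIV. \<Sum>l\<in>UNIV. \<beta> y a k * \<beta> y b l * christoffel G p k l y)"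
definition pullback_conn :: "'n \<Rightarrow> 'n \<Rightarrow> 'n \<Rightarrow> 'n field" where
  "pullback_conn c a b y = (\<Sum>p\<in>UNIV. Bc y p c * frame_conn a b p y)"

lemma pd_ghat_up:
  assumes y: "y \<in> U"
  shows "pd j (\<lambda>z. ghat_up G B z $ b $ c) y = (\<Sum>m\<in>UNIV. \<Sum>n\<in>UNIV.
     d\<beta> j b m y * \<beta> y c n * Gc y m n + \<beta> y b m * d\<beta> j c n y * Gc y m n + \<beta> y b m * \<beta> y c n * dG j m n y)"
proof -
  have "pd j (\<lambda>z. ghat_up G B z $ b $ c) y = pd j (\<lambda>z. \<Sum>m\<in>UNIV. \<Sum>n\<in>UNIV. \<beta> z b m * \<beta> z c n * Gc z m n) y"
    by (simp only: ghat_up_entry)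
  also have "\<dots> = (\<Sum>m\<in>UNIV. pd j (\<lambda>z. \<Sum>n\<in>UNIV. \<beta> z b m * \<beta> z c n * Gc z m n) y)"
    by (rule pd_sum) (auto intro!: differentiable_sum differentiable_mult beta_differentiable[OF y] G_differentiable[OF y])
  also have "\<dots> = (\<Sum>m\<in>UNIV. \<Sum>n\<in>UNIV. pd j (\<lambda>z. \<beta> z b m * \<beta> z c n * Gc z m n) y)"
    by (intro sum.cong refl pd_sum) (auto intro!: differentiable_sum differentiable_mult beta_differentiable[OF y] G_differentiable[OF y])
  also have "\<dots> = (\<Sum>m\<in>UNIV. \<Sum>n\<in>UNIV.
     d\<beta> j b m y * \<beta> y c n * Gc y m n + \<beta> y b m * d\<beta> j c n y * Gc y m n + \<beta> y b m * \<beta> y c n * dG j m n y)"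
    by (intro sum.cong refl)
       (simp add: pd_mult differentiable_mult beta_differentiable[OF y] G_differentiable[OF y] algebra_simps)
  finally show ?thesis .
qed

lemma christoffel_lower:
  assumes y: "y \<in> U"
  shows "(\<Sum>p\<in>UNIV. christoffel G p k l y * Gc y p s) = christoffel_low s k l y"
proof -
  let ?T = "\<lambda>d. dG k d l y + dG l d k y - dG d k l y"
  have "(\<Sum>p\<in>UNIV. christoffel G p k l y * Gc y p s) = (\<Sum>p\<in>UNIV. \<Sum>d\<in>UNIV. (1/2) * (Gc y s p * Gi y p d * ?T d))"
    unfolding christoffel_def
    by (intro sum.cong refl) (simp add: sum_distrib_left sum_distrib_right G_sym[OF y, of p s for p] mult_ac)
  also have "\<dots> = (\<Sum>d\<in>UNIV. \<Sum>p\<in>UNIV. (1/2) * (Gc y s p * Gi y p d * ?T d))" by (rule sum.swap)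
  also have "\<dots> = (1/2) * (\<Sum>d\<in>UNIV. (\<Sum>p\<in>UNIV. Gc y s p * Gi y p d) * ?T d)"
    by (simp add: sum_distrib_left sum_distrib_right)
  also have "\<dots> = (1/2) * ?T s" by (simp only: G_Ginv[OF y] sum_delta_mult(1))
  finally show ?thesis by (simp add: christoffel_low_def)
qed

lemma ghat_up_factor: "ghat_up G B y $ m $ c = (\<Sum>r\<in>UNIV. \<beta> y m r * (\<Sum>s\<in>UNIV. \<beta> y c s * Gc y r s))"
  by (simp add: ghat_up_entry sum_distrib_left mult.assoc)

lemma B_beta_contract:
  assumes y: "y \<in> U"
  shows "(\<Sum>m\<in>UNIV. (\<Sum>p\<in>UNIV. Bc y p m * F p) * (\<Sum>r\<in>UNIV. \<beta> y m r * H r)) = (\<Sum>p\<in>UNIV. F p * H p)"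
proof -
  have "(\<Sum>m\<in>UNIV. (\<Sum>p\<in>UNIV. Bc y p m * F p) * (\<Sum>r\<in>UNIV. \<beta> y m r * H r))
      = (\<Sum>m\<in>UNIV. \<Sum>p\<in>UNIV. \<Sum>r\<in>UNIV. (Bc y p m * \<beta> y m r) * (F p * H r))"
    by (simp add: sum_product mult_ac)
  also have "\<dots> = (\<Sum>p\<in>UNIV. \<Sum>m\<in>UNIV. \<Sum>r\<in>UNIV. (Bc y p m * \<beta> y m r) * (F p * H r))"
    by (rule sum.swap)
  also have "\<dots> = (\<Sum>p\<in>UNIV. \<Sum>r\<in>UNIV. \<Sum>m\<in>UNIV. (Bc y p m * \<beta> y m r) * (F p * H r))"
    by (intro sum.cong refl sum.swap)
  also have "\<dots> = (\<Sum>p\<in>UNIV. \<Sum>r\<in>UNIV. (\<Sum>m\<in>UNIV. Bc y p m * \<beta> y m r) * (F p * H r))"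
    by (simp add: sum_distrib_right)
  also have "\<dots> = (\<Sum>p\<in>UNIV. F p * H p)" by (simp add: B_beta[OF y])
  finally show ?thesis .
qed

lemma pullback_conn_ghat_up:
  assumes y: "y \<in> U"
  shows "(\<Sum>m\<in>UNIV. pullback_conn m a b y * ghat_up G B y $ m $ c) = (\<Sum>p\<in>UNIV. frame_conn a b p y * (\<Sum>s\<in>UNIV. \<beta> y c s * Gc y p s))"
  unfolding pullback_conn_def ghat_up_factor by (rule B_beta_contract[OF y])

lemma christoffel_frame_contract:
  assumes y: "y \<in> U"
  shows "(\<Sum>p\<in>UNIV. (\<Sum>k\<in>UNIV. \<Sum>l\<in>UNIV. \<beta> y a k * \<beta> y b l * christoffel G p k l y) * (\<Sum>s\<in>UNIV. \<beta> y c s * Gc y p s))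
    = (\<Sum>k\<in>UNIV. \<Sum>l\<in>UNIV. \<Sum>s\<in>UNIV. \<beta> y a k * \<beta> y b l * \<beta> y c s * christoffel_low s k l y)"
proof -
  have "(\<Sum>p\<in>UNIV. (\<Sum>k\<in>UNIV. \<Sum>l\<in>UNIV. \<beta> y a k * \<beta> y b l * christoffel G p k l y) * (\<Sum>s\<in>UNIV. \<beta> y c s * Gc y p s))
    = (\<Sum>p\<in>UNIV. \<Sum>k\<in>UNIV. \<Sum>l\<in>UNIV. \<Sum>s\<in>UNIV. (\<beta> y a k * \<beta> y b l * \<beta> y c s) * (christoffel G p k l y * Gc y p s))"
    by (simp add: sum_distrib_left sum_distrib_right mult_ac)
  also have "\<dots> = (\<Sum>k\<in>UNIV. \<Sum>l\<in>UNIV. \<Sum>s\<in>UNIV. \<Sum>p\<in>UNIV. (\<beta> y a k * \<beta> y b l * \<beta> y c s) * (christoffel G p k l y * Gc y p s))"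
    by (rule sum_rotate4)
  also have "\<dots> = (\<Sum>k\<in>UNIV. \<Sum>l\<in>UNIV. \<Sum>s\<in>UNIV. \<beta> y a k * \<beta> y b l * \<beta> y c s * christoffel_low s k l y)"
    by (simp add: sum_distrib_left[symmetric] christoffel_lower[OF y])
  finally show ?thesis .
qed

lemma christoffel_low_pair:
  assumes y: "y \<in> U"
  shows "christoffel_low s k l y + christoffel_low l k s y = dG k l s y"
  unfolding christoffel_low_def using pd_G_sym[OF y, of k s l] pd_G_sym[OF y, of l s k] pd_G_sym[OF y, of s k l] by (simp add: field_simps)

lemma frame_conn_contract:
  assumes y: "y \<in> U"
  shows "(\<Sum>p\<in>UNIV. frame_conn a b p y * (\<Sum>s\<in>UNIV. \<beta> y c s * Gc y p s)) =
    (\<Sum>p\<in>UNIV. D_beta a b p y * (\<Sum>s\<in>UNIV. \<beta> y c s * Gc y p s))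
    + (\<Sum>k\<in>UNIV. \<Sum>l\<in>UNIV. \<Sum>s\<in>UNIV. \<beta> y a k * \<beta> y b l * \<beta> y c s * christoffel_low s k l y)"
  unfolding frame_conn_def christoffel_frame_contract[OF y, symmetric] by (simp add: distrib_right sum.distrib)

lemma D_ghat_up_eq:
  assumes y: "y \<in> U"
  shows "Dop B a (\<lambda>z. ghat_up G B z $ b $ c) y =
      (\<Sum>p\<in>UNIV. D_beta a b p y * (\<Sum>s\<in>UNIV. \<beta> y c s * Gc y p s))
    + (\<Sum>p\<in>UNIV. D_beta a c p y * (\<Sum>s\<in>UNIV. \<beta> y b s * Gc y p s))
    + (\<Sum>k\<in>UNIV. \<Sum>l\<in>UNIV. \<Sum>s\<in>UNIV. \<beta> y a k * \<beta> y b l * \<beta> y c s * dG k l s y)"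
proof -
  have "Dop B a (\<lambda>z. ghat_up G B z $ b $ c) y =
     (\<Sum>j\<in>UNIV. \<Sum>m\<in>UNIV. \<Sum>n\<in>UNIV. \<beta> y a j * d\<beta> j b m y * \<beta> y c n * Gc y m n)
   + (\<Sum>j\<in>UNIV. \<Sum>m\<in>UNIV. \<Sum>n\<in>UNIV. \<beta> y a j * \<beta> y b m * d\<beta> j c n y * Gc y m n)
   + (\<Sum>j\<in>UNIV. \<Sum>m\<in>UNIV. \<Sum>n\<in>UNIV. \<beta> y a j * \<beta> y b m * \<beta> y c n * dG j m n y)"
    unfolding Dop_def pd_ghat_up[OF y] by (simp add: sum_distrib_left sum.distrib distrib_left mult_ac)
  moreover have "(\<Sum>j\<in>UNIV. \<Sum>m\<in>UNIV. \<Sum>n\<in>UNIV. \<beta> y a j * d\<beta> j b m y * \<beta> y c n * Gc y m n)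
      = (\<Sum>p\<in>UNIV. D_beta a b p y * (\<Sum>s\<in>UNIV. \<beta> y c s * Gc y p s))"
    unfolding D_beta_def by (subst sum.swap) (simp add: sum_distrib_left sum_distrib_right mult_ac)
  moreover have "(\<Sum>j\<in>UNIV. \<Sum>m\<in>UNIV. \<Sum>n\<in>UNIV. \<beta> y a j * \<beta> y b m * d\<beta> j c n y * Gc y m n)
      = (\<Sum>n\<in>UNIV. \<Sum>j\<in>UNIV. \<Sum>m\<in>UNIV. \<beta> y a j * \<beta> y b m * d\<beta> j c n y * Gc y n m)"
    by (subst sum_rotate3[symmetric], intro sum.cong refl sum.swap[THEN trans])
       (subst G_sym[OF y], rule refl)
  moreover have "\<dots> = (\<Sum>p\<in>UNIV. D_beta a c p y * (\<Sum>s\<in>UNIV. \<beta> y b s * Gc y p s))"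
    unfolding D_beta_def by (simp add: sum_distrib_left sum_distrib_right mult_ac)
  ultimately show ?thesis by simp
qed

lemma christoffel_low_frame_sym:
  assumes y: "y \<in> U"
  shows "(\<Sum>k\<in>UNIV. \<Sum>l\<in>UNIV. \<Sum>s\<in>UNIV. \<beta> y a k * \<beta> y b l * \<beta> y c s * christoffel_low s k l y)
    + (\<Sum>k\<in>UNIV. \<Sum>l\<in>UNIV. \<Sum>s\<in>UNIV. \<beta> y a k * \<beta> y c l * \<beta> y b s * christoffel_low s k l y)
    = (\<Sum>k\<in>UNIV. \<Sum>l\<in>UNIV. \<Sum>s\<in>UNIV. \<beta> y a k * \<beta> y b l * \<beta> y c s * dG k l s y)"
proof -
  have "(\<Sum>k\<in>UNIV. \<Sum>l\<in>UNIV. \<Sum>s\<in>UNIV. \<beta> y a k * \<beta> y c l * \<beta> y b s * christoffel_low s k l y)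
      = (\<Sum>k\<in>UNIV. \<Sum>l\<in>UNIV. \<Sum>s\<in>UNIV. \<beta> y a k * \<beta> y b l * \<beta> y c s * christoffel_low l k s y)"
    by (intro sum.cong refl sum.swap[THEN trans]) (simp add: mult_ac)
  then show ?thesis
    by (simp add: sum.distrib[symmetric] distrib_left[symmetric] christoffel_low_pair[OF y])
qed

lemma ghat_metric_compat:
  assumes y: "y \<in> U"
  shows "Dop B a (\<lambda>z. ghat_up G B z $ b $ c) y =
     (\<Sum>m\<in>UNIV. pullback_conn m a b y * ghat_up G B y $ m $ c + pullback_conn m a c y * ghat_up G B y $ b $ m)"
proof -
  have "(\<Sum>m\<in>UNIV. pullback_conn m a b y * ghat_up G B y $ m $ c + pullback_conn m a c y * ghat_up G B y $ b $ m)
      = (\<Sum>m\<in>UNIV. pullback_conn m a b y * ghat_up G B y $ m $ c)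
        + (\<Sum>m\<in>UNIV. pullback_conn m a c y * ghat_up G B y $ m $ b)"
    by (simp add: sum.distrib ghat_up_sym[OF y, of b])
  then show ?thesis
    unfolding pullback_conn_ghat_up[OF y] frame_conn_contract[OF y] D_ghat_up_eq[OF y]
    using christoffel_low_frame_sym[OF y, of a b c] by linarith
qed

lemma beta_B_transposed:
  assumes y: "y \<in> U"
  shows "(\<Sum>n\<in>UNIV. \<beta> y n m * Bc y n c) = - (if m = c then 1 else 0)"
proof -
  have "(\<Sum>n\<in>UNIV. \<beta> y n m * Bc y n c) = (\<Sum>n\<in>UNIV. - (\<beta> y m n * Bc y n c))"
    by (intro sum.cong refl) (simp add: beta_skew[OF y, of n m for n])
  also have "\<dots> = - (if m = c then 1 else 0)" by (simp add: sum_negf beta_B[OF y])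
  finally show ?thesis .
qed

lemma Theta_up_eq_D_beta:
  assumes y: "y \<in> U"
  shows "Theta_up B a b n y = D_beta a b n y - D_beta b a n y + (\<Sum>m\<in>UNIV. \<beta> y n m * d\<beta> m a b y)"
proof -
  have "(\<Sum>m\<in>UNIV. \<beta> y b m * d\<beta> m n a y) = - D_beta b a n y"
    unfolding D_beta_def by (simp add: pd_beta_skew[OF y, of _ n a] sum_negf)
  then show ?thesis unfolding Theta_up_def D_beta_def by (simp add: sum.distrib)
qed

lemma Qf_eq_D_beta:
  assumes y: "y \<in> U"
  shows "Qf B c a b y = (\<Sum>n\<in>UNIV. Bc y n c * (D_beta a b n y - D_beta b a n y))"
proof -
  have "(\<Sum>n\<in>UNIV. (\<Sum>m\<in>UNIV. \<beta> y n m * d\<beta> m a b y) * Bc y n c) = (\<Sum>m\<in>UNIV. \<Sum>n\<in>UNIV. d\<beta> m a b y * (\<beta> y n m * Bc y n c))"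
  proof -
    have "(\<Sum>n\<in>UNIV. (\<Sum>m\<in>UNIV. \<beta> y n m * d\<beta> m a b y) * Bc y n c) = (\<Sum>n\<in>UNIV. \<Sum>m\<in>UNIV. d\<beta> m a b y * (\<beta> y n m * Bc y n c))"
      by (simp add: sum_distrib_right sum_distrib_left mult_ac)
    also have "\<dots> = (\<Sum>m\<in>UNIV. \<Sum>n\<in>UNIV. d\<beta> m a b y * (\<beta> y n m * Bc y n c))" by (rule sum.swap)
    finally show ?thesis .
  qed
  also have "\<dots> = (\<Sum>m\<in>UNIV. d\<beta> m a b y * (- (if m = c then 1 else 0)))"
    by (simp add: sum_distrib_left[symmetric] beta_B_transposed[OF y])
  also have "\<dots> = - d\<beta> c a b y" by (simp add: sum_negf)
  finally have e: "(\<Sum>n\<in>UNIV. (\<Sum>m\<in>UNIV. \<beta> y n m * d\<beta> m a b y) * Bc y n c) = - d\<beta> c a b y" .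
  have "Qf B c a b y = d\<beta> c a b y + (\<Sum>n\<in>UNIV. (D_beta a b n y - D_beta b a n y) * Bc y n c)
        + (\<Sum>n\<in>UNIV. (\<Sum>m\<in>UNIV. \<beta> y n m * d\<beta> m a b y) * Bc y n c)"
    unfolding Qf_def Theta_up_eq_D_beta[OF y] by (simp add: distrib_right sum.distrib)
  then show ?thesis unfolding e by (simp add: mult.commute)
qed

lemma frame_conn_antisym:
  assumes y: "y \<in> U"
  shows "frame_conn a b p y - frame_conn b a p y = D_beta a b p y - D_beta b a p y"
proof -
  have "(\<Sum>k\<in>UNIV. \<Sum>l\<in>UNIV. \<beta> y b k * \<beta> y a l * christoffel G p k l y)
      = (\<Sum>l\<in>UNIV. \<Sum>k\<in>UNIV. \<beta> y b k * \<beta> y a l * christoffel G p k l y)" by (rule sum.swap)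
  also have "\<dots> = (\<Sum>k\<in>UNIV. \<Sum>l\<in>UNIV. \<beta> y a k * \<beta> y b l * christoffel G p k l y)"
    by (intro sum.cong refl) (simp add: christoffel_sym[OF y, of p] mult_ac)
  finally show ?thesis unfolding frame_conn_def by simp
qed

lemma pullback_conn_torsion:
  assumes y: "y \<in> U"
  shows "pullback_conn c a b y - pullback_conn c b a y = Qf B c a b y"
  unfolding pullback_conn_def Qf_eq_D_beta[OF y] by (simp add: sum_subtractf[symmetric] right_diff_distrib[symmetric] frame_conn_antisym[OF y])

lemma Gamma_hat_eq_pullback_conn:
  assumes y: "y \<in> U"
  shows "Gamma_hat G B c a b y = pullback_conn c a b y"
  unfolding Gamma_hat_def
  by (rule koszul_formula[where gu = "\<lambda>a b. ghat_up G B y $ a $ b" and gl = "\<lambda>a b. ghat_low G B y $ a $ b"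
      and Dg = "\<lambda>a b c. Dop B a (\<lambda>z. ghat_up G B z $ b $ c) y" and X = "\<lambda>c a b. pullback_conn c a b y"
      and Q = "\<lambda>c a b. Qf B c a b y", OF ghat_low_ghat_up[OF y] ghat_up_sym[OF y] ghat_metric_compat[OF y] pullback_conn_torsion[OF y]])


lemma D_beta_differentiable: "x \<in> U \<Longrightarrow> D_beta a b p differentiable at x"
  unfolding D_beta_def[abs_def] by (intro differentiable_sum ballI finite differentiable_mult beta_differentiable pd_beta_differentiable)

lemma frame_conn_differentiable: "x \<in> U \<Longrightarrow> frame_conn a b p differentiable at x"
  unfolding frame_conn_def[abs_def] by (intro differentiable_add differentiable_sum ballI finite differentiable_mult beta_differentiable christoffel_differentiable D_beta_differentiable)

lemma pd_Gamma_hat: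
  assumes x: "x \<in> U"
  shows "pd j (Gamma_hat G B a d b) x = (\<Sum>p\<in>UNIV. Bc x p a * pd j (frame_conn d b p) x + dB j p a x * frame_conn d b p x)"
proof -
  have "pd j (Gamma_hat G B a d b) x = pd j (\<lambda>y. \<Sum>p\<in>UNIV. Bc y p a * frame_conn d b p y) x"
    by (rule pd_cong_open[OF open_U x]) (simp add: Gamma_hat_eq_pullback_conn pullback_conn_def)
  also have "\<dots> = (\<Sum>p\<in>UNIV. pd j (\<lambda>y. Bc y p a * frame_conn d b p y) x)"
    by (rule pd_sum) (auto intro!: differentiable_mult B_differentiable[OF x] frame_conn_differentiable[OF x])
  also have "\<dots> = (\<Sum>p\<in>UNIV. Bc x p a * pd j (frame_conn d b p) x + dB j p a x * frame_conn d b p x)"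
    by (intro sum.cong refl) (simp add: pd_mult B_differentiable[OF x] frame_conn_differentiable[OF x])
  finally show ?thesis .
qed

lemma B_pd_beta:
  assumes x: "x \<in> U"
  shows "(\<Sum>m\<in>UNIV. Bc x q m * d\<beta> j m p x) = - (\<Sum>m\<in>UNIV. dB j q m x * \<beta> x m p)"
proof -
  have "pd j (\<lambda>y. \<Sum>m\<in>UNIV. Bc y q m * \<beta> y m p) x = pd j (\<lambda>y. if q = p then 1 else 0) x"
    by (rule pd_cong_open[OF open_U x]) (simp add: B_beta)
  also have "\<dots> = 0" by simp
  finally have "pd j (\<lambda>y. \<Sum>m\<in>UNIV. Bc y q m * \<beta> y m p) x = 0" .
  moreover have "pd j (\<lambda>y. \<Sum>m\<in>UNIV. Bc y q m * \<beta> y m p) x = (\<Sum>m\<in>UNIV. Bc x q m * d\<beta> j m p x + dB j q m x * \<beta> x m p)"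
    by (subst pd_sum) (auto intro!: sum.cong pd_mult B_differentiable[OF x] beta_differentiable[OF x] differentiable_mult)
  ultimately show ?thesis by (simp add: sum.distrib eq_neg_iff_add_eq_0)
qed

text \<open>\<open>cov_frame_conn c d b p\<close> is the \<open>p\<close>-component of
  \<open>\<nabla>\<^bsub>\<beta>\<^sup>c\<^esub> \<nabla>\<^bsub>\<beta>\<^sup>d\<^esub> \<beta>\<^sup>b\<close>.\<close>

definition cov_frame_conn :: "'n \<Rightarrow> 'n \<Rightarrow> 'n \<Rightarrow> 'n \<Rightarrow> 'n field" where
  "cov_frame_conn c d b p y = Dop B c (frame_conn d b p) y
   + (\<Sum>k\<in>UNIV. \<Sum>q\<in>UNIV. \<beta> y c k * christoffel G p k q y * frame_conn d b q y)"

lemma B_frame_conn: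
  assumes x: "x \<in> U"
  shows "(\<Sum>m\<in>UNIV. Bc x q m * frame_conn c m p x) =
    - (\<Sum>j\<in>UNIV. \<Sum>m\<in>UNIV. \<beta> x c j * dB j q m x * \<beta> x m p) + (\<Sum>k\<in>UNIV. \<beta> x c k * christoffel G p k q x)"
proof -
  have e1: "(\<Sum>m\<in>UNIV. Bc x q m * D_beta c m p x) = - (\<Sum>j\<in>UNIV. \<Sum>m\<in>UNIV. \<beta> x c j * dB j q m x * \<beta> x m p)"
  proof -
    have "(\<Sum>m\<in>UNIV. Bc x q m * D_beta c m p x) = (\<Sum>m\<in>UNIV. \<Sum>j\<in>UNIV. \<beta> x c j * (Bc x q m * d\<beta> j m p x))"
      unfolding D_beta_def by (simp add: sum_distrib_left mult_ac)
    also have "\<dots> = (\<Sum>j\<in>UNIV. \<Sum>m\<in>UNIV. \<beta> x c j * (Bc x q m * d\<beta> j m p x))" by (rule sum.swap)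
    also have "\<dots> = (\<Sum>j\<in>UNIV. \<beta> x c j * (- (\<Sum>m\<in>UNIV. dB j q m x * \<beta> x m p)))"
      by (simp add: sum_distrib_left[symmetric] B_pd_beta[OF x])
    also have "\<dots> = - (\<Sum>j\<in>UNIV. \<Sum>m\<in>UNIV. \<beta> x c j * dB j q m x * \<beta> x m p)"
      by (simp add: sum_distrib_left sum_negf mult_ac)
    finally show ?thesis .
  qed
  have e2: "(\<Sum>m\<in>UNIV. Bc x q m * (\<Sum>k\<in>UNIV. \<Sum>l\<in>UNIV. \<beta> x c k * \<beta> x m l * christoffel G p k l x))
     = (\<Sum>k\<in>UNIV. \<beta> x c k * christoffel G p k q x)"
  proof -
    have "(\<Sum>m\<in>UNIV. Bc x q m * (\<Sum>k\<in>UNIV. \<Sum>l\<in>UNIV. \<beta> x c k * \<beta> x m l * christoffel G p k l x))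
      = (\<Sum>m\<in>UNIV. \<Sum>k\<in>UNIV. \<Sum>l\<in>UNIV. (\<beta> x c k * christoffel G p k l x) * (Bc x q m * \<beta> x m l))"
      by (simp add: sum_distrib_left mult_ac)
    also have "\<dots> = (\<Sum>k\<in>UNIV. \<Sum>l\<in>UNIV. \<Sum>m\<in>UNIV. (\<beta> x c k * christoffel G p k l x) * (Bc x q m * \<beta> x m l))"
      by (rule sum_rotate3)
    also have "\<dots> = (\<Sum>k\<in>UNIV. \<Sum>l\<in>UNIV. (\<beta> x c k * christoffel G p k l x) * (if q = l then 1 else 0))"
      by (simp add: sum_distrib_left[symmetric] B_beta[OF x])
    also have "\<dots> = (\<Sum>k\<in>UNIV. \<beta> x c k * christoffel G p k q x)" by simp
    finally show ?thesis .
  qed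
  show ?thesis unfolding frame_conn_def using e1 e2 by (simp add: distrib_left sum.distrib)
qed

lemma Dop_Gamma_hat:
  assumes x: "x \<in> U"
  shows "Dop B c (Gamma_hat G B a d b) x
    = (\<Sum>p\<in>UNIV. Bc x p a * Dop B c (frame_conn d b p) x) + (\<Sum>q\<in>UNIV. frame_conn d b q x * (\<Sum>j\<in>UNIV. \<beta> x c j * dB j q a x))"
proof -
  have "Dop B c (Gamma_hat G B a d b) x = (\<Sum>j\<in>UNIV. \<Sum>p\<in>UNIV. Bc x p a * (\<beta> x c j * pd j (frame_conn d b p) x) + frame_conn d b p x * (\<beta> x c j * dB j p a x))"
    unfolding Dop_def pd_Gamma_hat[OF x] by (simp add: sum_distrib_left algebra_simps)
  also have "\<dots> = (\<Sum>p\<in>UNIV. \<Sum>j\<in>UNIV. Bc x p a * (\<beta> x c j * pd j (frame_conn d b p) x) + frame_conn d b p x * (\<beta> x c j * dB j p a x))"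
    by (rule sum.swap)
  also have "\<dots> = (\<Sum>p\<in>UNIV. Bc x p a * Dop B c (frame_conn d b p) x) + (\<Sum>q\<in>UNIV. frame_conn d b q x * (\<Sum>j\<in>UNIV. \<beta> x c j * dB j q a x))"
    unfolding Dop_def by (simp add: sum.distrib sum_distrib_left)
  finally show ?thesis .
qed

lemma Gamma_hat_mult_Gamma_hat:
  assumes x: "x \<in> U"
  shows "(\<Sum>m\<in>UNIV. Gamma_hat G B a c m x * Gamma_hat G B m d b x)
    = (\<Sum>p\<in>UNIV. Bc x p a * (\<Sum>q\<in>UNIV. frame_conn d b q x * (\<Sum>k\<in>UNIV. \<beta> x c k * christoffel G p k q x)))
      - (\<Sum>q\<in>UNIV. frame_conn d b q x * (\<Sum>j\<in>UNIV. \<beta> x c j * dB j q a x))"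
proof -
  have pair_eq: "(\<Sum>m\<in>UNIV. Gamma_hat G B a c m x * Gamma_hat G B m d b x)
     = (\<Sum>p\<in>UNIV. Bc x p a * (\<Sum>q\<in>UNIV. frame_conn d b q x * (\<Sum>m\<in>UNIV. Bc x q m * frame_conn c m p x)))"
  proof -
    have "(\<Sum>m\<in>UNIV. Gamma_hat G B a c m x * Gamma_hat G B m d b x)
       = (\<Sum>m\<in>UNIV. \<Sum>q\<in>UNIV. \<Sum>p\<in>UNIV. Bc x q m * (Bc x p a * (frame_conn c m p x * frame_conn d b q x)))"
      unfolding Gamma_hat_eq_pullback_conn[OF x] pullback_conn_def by (simp add: sum_product mult_ac)
    also have "\<dots> = (\<Sum>q\<in>UNIV. \<Sum>p\<in>UNIV. \<Sum>m\<in>UNIV. Bc x q m * (Bc x p a * (frame_conn c m p x * frame_conn d b q x)))"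
      by (rule sum_rotate3)
    also have "\<dots> = (\<Sum>p\<in>UNIV. \<Sum>q\<in>UNIV. \<Sum>m\<in>UNIV. Bc x q m * (Bc x p a * (frame_conn c m p x * frame_conn d b q x)))"
      by (rule sum.swap)
    also have "\<dots> = (\<Sum>p\<in>UNIV. Bc x p a * (\<Sum>q\<in>UNIV. frame_conn d b q x * (\<Sum>m\<in>UNIV. Bc x q m * frame_conn c m p x)))"
      by (simp add: sum_distrib_left mult_ac)
    finally show ?thesis .
  qed
  have dB_term: "(\<Sum>p\<in>UNIV. Bc x p a * (\<Sum>q\<in>UNIV. frame_conn d b q x * (\<Sum>j\<in>UNIV. \<Sum>m\<in>UNIV. \<beta> x c j * dB j q m x * \<beta> x m p))) = (\<Sum>q\<in>UNIV. frame_conn d b q x * (\<Sum>j\<in>UNIV. \<beta> x c j * dB j q a x))"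
  proof -
    have "(\<Sum>p\<in>UNIV. Bc x p a * (\<Sum>q\<in>UNIV. frame_conn d b q x * (\<Sum>j\<in>UNIV. \<Sum>m\<in>UNIV. \<beta> x c j * dB j q m x * \<beta> x m p)))
      = (\<Sum>p\<in>UNIV. \<Sum>q\<in>UNIV. \<Sum>j\<in>UNIV. \<Sum>m\<in>UNIV. (frame_conn d b q x * \<beta> x c j * dB j q m x) * (\<beta> x m p * Bc x p a))"
      by (simp add: sum_distrib_left mult_ac)
    also have "\<dots> = (\<Sum>q\<in>UNIV. \<Sum>j\<in>UNIV. \<Sum>m\<in>UNIV. \<Sum>p\<in>UNIV. (frame_conn d b q x * \<beta> x c j * dB j q m x) * (\<beta> x m p * Bc x p a))"
      by (rule sum_rotate4)
    also have "\<dots> = (\<Sum>q\<in>UNIV. \<Sum>j\<in>UNIV. \<Sum>m\<in>UNIV. (frame_conn d b q x * \<beta> x c j * dB j q m x) * (if m = a then 1 else 0))"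
      by (simp add: sum_distrib_left[symmetric] beta_B[OF x])
    also have "\<dots> = (\<Sum>q\<in>UNIV. frame_conn d b q x * (\<Sum>j\<in>UNIV. \<beta> x c j * dB j q a x))" by (simp add: sum_distrib_left mult_ac)
    finally show ?thesis .
  qed
  have B_frame_term: "(\<Sum>p\<in>UNIV. Bc x p a * (\<Sum>q\<in>UNIV. frame_conn d b q x * (\<Sum>m\<in>UNIV. Bc x q m * frame_conn c m p x)))
    = - (\<Sum>q\<in>UNIV. frame_conn d b q x * (\<Sum>j\<in>UNIV. \<beta> x c j * dB j q a x)) + (\<Sum>p\<in>UNIV. Bc x p a * (\<Sum>q\<in>UNIV. frame_conn d b q x * (\<Sum>k\<in>UNIV. \<beta> x c k * christoffel G p k q x)))"
    unfolding B_frame_conn[OF x] dB_term[symmetric]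
    by (simp add: distrib_left right_diff_distrib sum.distrib sum_subtractf sum_negf)
  show ?thesis unfolding pair_eq B_frame_term by simp
qed

lemma R_hat4_half_eq:
  assumes x: "x \<in> U"
  shows "Dop B c (Gamma_hat G B a d b) x + (\<Sum>m\<in>UNIV. Gamma_hat G B a c m x * Gamma_hat G B m d b x)
    = (\<Sum>p\<in>UNIV. Bc x p a * cov_frame_conn c d b p x)"
proof -
  have cov_split: "(\<Sum>p\<in>UNIV. Bc x p a * cov_frame_conn c d b p x) = (\<Sum>p\<in>UNIV. Bc x p a * Dop B c (frame_conn d b p) x)
     + (\<Sum>p\<in>UNIV. Bc x p a * (\<Sum>q\<in>UNIV. frame_conn d b q x * (\<Sum>k\<in>UNIV. \<beta> x c k * christoffel G p k q x)))"
  proof -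
    have "(\<Sum>k\<in>UNIV. \<Sum>q\<in>UNIV. \<beta> x c k * christoffel G p k q x * frame_conn d b q x)
       = (\<Sum>q\<in>UNIV. frame_conn d b q x * (\<Sum>k\<in>UNIV. \<beta> x c k * christoffel G p k q x))" for p
    proof -
      have "(\<Sum>k\<in>UNIV. \<Sum>q\<in>UNIV. \<beta> x c k * christoffel G p k q x * frame_conn d b q x)
        = (\<Sum>q\<in>UNIV. \<Sum>k\<in>UNIV. \<beta> x c k * christoffel G p k q x * frame_conn d b q x)" by (rule sum.swap)
      then show ?thesis by (simp add: sum_distrib_left mult_ac)
    qed
    then show ?thesis unfolding cov_frame_conn_def by (simp add: distrib_left sum.distrib)
  qed
  show ?thesis unfolding Dop_Gamma_hat[OF x] Gamma_hat_mult_Gamma_hat[OF x] cov_split by simp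
qed

lemma R_hat4_eq_cov_frame_conn:
  assumes x: "x \<in> U"
  shows "R_hat4 G B a b c d x = (\<Sum>p\<in>UNIV. Bc x p a * (cov_frame_conn c d b p x - cov_frame_conn d c b p x - (\<Sum>m\<in>UNIV. Qf B m c d x * frame_conn m b p x)))"
proof -
  have q: "(\<Sum>m\<in>UNIV. Gamma_hat G B a m b x * Qf B m c d x) = (\<Sum>p\<in>UNIV. Bc x p a * (\<Sum>m\<in>UNIV. Qf B m c d x * frame_conn m b p x))"
  proof -
    have "(\<Sum>m\<in>UNIV. Gamma_hat G B a m b x * Qf B m c d x) = (\<Sum>m\<in>UNIV. \<Sum>p\<in>UNIV. Bc x p a * (Qf B m c d x * frame_conn m b p x))"
      unfolding Gamma_hat_eq_pullback_conn[OF x] pullback_conn_def by (simp add: sum_distrib_right sum_distrib_left mult_ac)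
    also have "\<dots> = (\<Sum>p\<in>UNIV. \<Sum>m\<in>UNIV. Bc x p a * (Qf B m c d x * frame_conn m b p x))" by (rule sum.swap)
    also have "\<dots> = (\<Sum>p\<in>UNIV. Bc x p a * (\<Sum>m\<in>UNIV. Qf B m c d x * frame_conn m b p x))" by (simp add: sum_distrib_left)
    finally show ?thesis .
  qed
  have "R_hat4 G B a b c d x = (Dop B c (Gamma_hat G B a d b) x + (\<Sum>m\<in>UNIV. Gamma_hat G B a c m x * Gamma_hat G B m d b x))
     - (Dop B d (Gamma_hat G B a c b) x + (\<Sum>m\<in>UNIV. Gamma_hat G B a d m x * Gamma_hat G B m c b x))
     - (\<Sum>m\<in>UNIV. Gamma_hat G B a m b x * Qf B m c d x)"
    unfolding R_hat4_def by (simp add: sum_subtractf)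
  also have "\<dots> = (\<Sum>p\<in>UNIV. Bc x p a * cov_frame_conn c d b p x) - (\<Sum>p\<in>UNIV. Bc x p a * cov_frame_conn d c b p x)
      - (\<Sum>p\<in>UNIV. Bc x p a * (\<Sum>m\<in>UNIV. Qf B m c d x * frame_conn m b p x))"
    unfolding R_hat4_half_eq[OF x] q ..
  also have "\<dots> = (\<Sum>p\<in>UNIV. Bc x p a * (cov_frame_conn c d b p x - cov_frame_conn d c b p x - (\<Sum>m\<in>UNIV. Qf B m c d x * frame_conn m b p x)))"
    by (simp add: right_diff_distrib sum_subtractf)
  finally show ?thesis .
qed

lemma pd_D_beta:
  assumes x: "x \<in> U"
  shows "pd j (D_beta d b p) x = (\<Sum>k\<in>UNIV. d\<beta> j d k x * d\<beta> k b p x + \<beta> x d k * pd j (pd k (\<lambda>z. beta B z $ b $ p)) x)"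
  unfolding D_beta_def[abs_def]
  by (subst pd_sum) (auto intro!: sum.cong simp: pd_mult beta_differentiable[OF x] pd_beta_differentiable[OF x] differentiable_mult)

lemma pd_frame_christoffel:
  assumes x: "x \<in> U"
  shows "pd j (\<lambda>y. \<Sum>k\<in>UNIV. \<Sum>l\<in>UNIV. \<beta> y d k * \<beta> y b l * christoffel G p k l y) x =
    (\<Sum>k\<in>UNIV. \<Sum>l\<in>UNIV. d\<beta> j d k x * \<beta> x b l * christoffel G p k l x + \<beta> x d k * d\<beta> j b l x * christoffel G p k l x
       + \<beta> x d k * \<beta> x b l * pd j (christoffel G p k l) x)"
proof -
  have "pd j (\<lambda>y. \<Sum>k\<in>UNIV. \<Sum>l\<in>UNIV. \<beta> y d k * \<beta> y b l * christoffel G p k l y) x =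
     (\<Sum>k\<in>UNIV. pd j (\<lambda>y. \<Sum>l\<in>UNIV. \<beta> y d k * \<beta> y b l * christoffel G p k l y) x)"
    by (rule pd_sum) (auto intro!: differentiable_sum differentiable_mult beta_differentiable[OF x] christoffel_differentiable[OF x])
  also have "\<dots> = (\<Sum>k\<in>UNIV. \<Sum>l\<in>UNIV. pd j (\<lambda>y. \<beta> y d k * \<beta> y b l * christoffel G p k l y) x)"
    by (intro sum.cong refl pd_sum) (auto intro!: differentiable_mult beta_differentiable[OF x] christoffel_differentiable[OF x])
  also have "\<dots> = (\<Sum>k\<in>UNIV. \<Sum>l\<in>UNIV. d\<beta> j d k x * \<beta> x b l * christoffel G p k l x + \<beta> x d k * d\<beta> j b l x * christoffel G p k l x
       + \<beta> x d k * \<beta> x b l * pd j (christoffel G p k l) x)"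
  proof (intro sum.cong refl)
    fix k l
    have "pd j (\<lambda>y. \<beta> y d k * \<beta> y b l * christoffel G p k l y) x =
        (\<beta> x d k * \<beta> x b l) * pd j (christoffel G p k l) x + pd j (\<lambda>y. \<beta> y d k * \<beta> y b l) x * christoffel G p k l x"
      by (rule pd_mult) (auto intro!: differentiable_mult beta_differentiable[OF x] christoffel_differentiable[OF x])
    also have "pd j (\<lambda>y. \<beta> y d k * \<beta> y b l) x = \<beta> x d k * d\<beta> j b l x + d\<beta> j d k x * \<beta> x b l"
      by (rule pd_mult) (auto intro!: beta_differentiable[OF x])
    finally show "pd j (\<lambda>y. \<beta> y d k * \<beta> y b l * christoffel G p k l y) x =
      d\<beta> j d k x * \<beta> x b l * christoffel G p k l x + \<beta> x d k * d\<beta> j b l x * christoffel G p k l x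
       + \<beta> x d k * \<beta> x b l * pd j (christoffel G p k l) x" by (simp add: algebra_simps)
  qed
  finally show ?thesis .
qed

lemma pd_frame_conn:
  assumes x: "x \<in> U"
  shows "pd j (frame_conn d b p) x = pd j (D_beta d b p) x + pd j (\<lambda>y. \<Sum>k\<in>UNIV. \<Sum>l\<in>UNIV. \<beta> y d k * \<beta> y b l * christoffel G p k l y) x"
  unfolding frame_conn_def[abs_def]
  by (rule pd_add) (auto intro!: D_beta_differentiable[OF x] differentiable_sum differentiable_mult beta_differentiable[OF x] christoffel_differentiable[OF x])


definition frame_pd_christoffel :: "'n \<Rightarrow> 'n \<Rightarrow> 'n \<Rightarrow> 'n \<Rightarrow> 'n field" where
  "frame_pd_christoffel c d b p y =
    (\<Sum>j\<in>UNIV. \<Sum>k\<in>UNIV. \<Sum>l\<in>UNIV. \<beta> y c j * \<beta> y d k * \<beta> y b l * pd j (christoffel G p k l) y)"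

definition frame_christoffel_sq :: "'n \<Rightarrow> 'n \<Rightarrow> 'n \<Rightarrow> 'n \<Rightarrow> 'n field" where
  "frame_christoffel_sq c d b p y =
    (\<Sum>k\<in>UNIV. \<Sum>q\<in>UNIV. \<beta> y c k * christoffel G p k q y *
      (\<Sum>k'\<in>UNIV. \<Sum>l'\<in>UNIV. \<beta> y d k' * \<beta> y b l' * christoffel G q k' l' y))"

lemma riemann_frame_eq:
  assumes x: "x \<in> U"
  shows "(\<Sum>j\<in>UNIV. \<Sum>k\<in>UNIV. \<Sum>l\<in>UNIV. \<beta> x c j * \<beta> x d k * \<beta> x b l * riemann G p l j k x)
     = frame_pd_christoffel c d b p x - frame_pd_christoffel d c b p x
       + (frame_christoffel_sq c d b p x - frame_christoffel_sq d c b p x)"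
proof -
  let ?C = "\<lambda>k l. christoffel G p k l x"
  define R3 where "R3 = (\<Sum>j\<in>UNIV. \<Sum>k\<in>UNIV. \<Sum>l\<in>UNIV. \<Sum>e\<in>UNIV. \<beta> x c j * \<beta> x d k * \<beta> x b l * (?C j e * christoffel G e k l x))"
  define R4 where "R4 = (\<Sum>j\<in>UNIV. \<Sum>k\<in>UNIV. \<Sum>l\<in>UNIV. \<Sum>e\<in>UNIV. \<beta> x c j * \<beta> x d k * \<beta> x b l * (?C k e * christoffel G e j l x))"
  define R2 where "R2 = (\<Sum>j\<in>UNIV. \<Sum>k\<in>UNIV. \<Sum>l\<in>UNIV. \<beta> x c j * \<beta> x d k * \<beta> x b l * pd k (christoffel G p j l) x)"
  have split: "(\<Sum>j\<in>UNIV. \<Sum>k\<in>UNIV. \<Sum>l\<in>UNIV. \<beta> x c j * \<beta> x d k * \<beta> x b l * riemann G p l j k x)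
     = frame_pd_christoffel c d b p x - R2 + (R3 - R4)"
    unfolding riemann_def frame_pd_christoffel_def R2_def R3_def R4_def
    by (simp add: algebra_simps sum.distrib sum_subtractf sum_distrib_left)
  have r2: "R2 = frame_pd_christoffel d c b p x"
  proof -
    have "frame_pd_christoffel d c b p x = (\<Sum>k\<in>UNIV. \<Sum>j\<in>UNIV. \<Sum>l\<in>UNIV. \<beta> x d j * \<beta> x c k * \<beta> x b l * pd j (christoffel G p k l) x)"
      unfolding frame_pd_christoffel_def by (rule sum.swap)
    then show ?thesis unfolding R2_def by (simp add: mult_ac)
  qed
  have r3: "R3 = frame_christoffel_sq c d b p x"
  proof -
    have "frame_christoffel_sq c d b p x = (\<Sum>j\<in>UNIV. \<Sum>e\<in>UNIV. \<Sum>k\<in>UNIV. \<Sum>l\<in>UNIV. \<beta> x c j * \<beta> x d k * \<beta> x b l * (?C j e * christoffel G e k l x))"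
      unfolding frame_christoffel_sq_def by (simp add: sum_distrib_left mult_ac)
    also have "\<dots> = R3" unfolding R3_def by (intro sum.cong refl sum_rotate3)
    finally show ?thesis by simp
  qed
  have r4: "R4 = frame_christoffel_sq d c b p x"
  proof -
    have "frame_christoffel_sq d c b p x = (\<Sum>k\<in>UNIV. \<Sum>e\<in>UNIV. \<Sum>j\<in>UNIV. \<Sum>l\<in>UNIV. \<beta> x c j * \<beta> x d k * \<beta> x b l * (?C k e * christoffel G e j l x))"
      unfolding frame_christoffel_sq_def by (simp add: sum_distrib_left mult_ac)
    also have "\<dots> = (\<Sum>k\<in>UNIV. \<Sum>j\<in>UNIV. \<Sum>l\<in>UNIV. \<Sum>e\<in>UNIV. \<beta> x c j * \<beta> x d k * \<beta> x b l * (?C k e * christoffel G e j l x))"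
      by (intro sum.cong refl sum_rotate3)
    also have "\<dots> = R4" unfolding R4_def by (rule sum.swap)
    finally show ?thesis by simp
  qed
  show ?thesis unfolding split r2 r3 r4 ..
qed

lemma Dop_frame_conn_eq:
  assumes x: "x \<in> U"
  shows "Dop B c (frame_conn d b p) x =
    (\<Sum>k\<in>UNIV. D_beta c d k x * d\<beta> k b p x) + (\<Sum>j\<in>UNIV. \<Sum>k\<in>UNIV. \<beta> x c j * \<beta> x d k * pd j (pd k (\<lambda>z. beta B z $ b $ p)) x)
    + (\<Sum>k\<in>UNIV. \<Sum>l\<in>UNIV. D_beta c d k x * \<beta> x b l * christoffel G p k l x) + (\<Sum>k\<in>UNIV. \<Sum>l\<in>UNIV. \<beta> x d k * D_beta c b l x * christoffel G p k l x)
    + frame_pd_christoffel c d b p x"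
proof -
  let ?C = "\<lambda>k l. christoffel G p k l x"
  let ?dd = "\<lambda>j k. pd j (pd k (\<lambda>z. beta B z $ b $ p)) x"
  have exp: "Dop B c (frame_conn d b p) x =
      (\<Sum>j\<in>UNIV. \<Sum>k\<in>UNIV. \<beta> x c j * (d\<beta> j d k x * d\<beta> k b p x))
    + (\<Sum>j\<in>UNIV. \<Sum>k\<in>UNIV. \<beta> x c j * (\<beta> x d k * ?dd j k))
    + (\<Sum>j\<in>UNIV. \<Sum>k\<in>UNIV. \<Sum>l\<in>UNIV. \<beta> x c j * (d\<beta> j d k x * \<beta> x b l * ?C k l))
    + (\<Sum>j\<in>UNIV. \<Sum>k\<in>UNIV. \<Sum>l\<in>UNIV. \<beta> x c j * (\<beta> x d k * d\<beta> j b l x * ?C k l))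
    + (\<Sum>j\<in>UNIV. \<Sum>k\<in>UNIV. \<Sum>l\<in>UNIV. \<beta> x c j * (\<beta> x d k * \<beta> x b l * pd j (christoffel G p k l) x))"
    unfolding Dop_def pd_frame_conn[OF x] pd_D_beta[OF x] pd_frame_christoffel[OF x]
    by (simp add: distrib_left sum.distrib sum_distrib_left)
  have a: "(\<Sum>j\<in>UNIV. \<Sum>k\<in>UNIV. \<beta> x c j * (d\<beta> j d k x * d\<beta> k b p x)) = (\<Sum>k\<in>UNIV. D_beta c d k x * d\<beta> k b p x)"
  proof -
    have "(\<Sum>j\<in>UNIV. \<Sum>k\<in>UNIV. \<beta> x c j * (d\<beta> j d k x * d\<beta> k b p x)) = (\<Sum>k\<in>UNIV. \<Sum>j\<in>UNIV. \<beta> x c j * (d\<beta> j d k x * d\<beta> k b p x))"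
      by (rule sum.swap)
    then show ?thesis unfolding D_beta_def by (simp add: sum_distrib_right sum_distrib_left mult_ac)
  qed
  have b: "(\<Sum>j\<in>UNIV. \<Sum>k\<in>UNIV. \<beta> x c j * (\<beta> x d k * ?dd j k)) = (\<Sum>j\<in>UNIV. \<Sum>k\<in>UNIV. \<beta> x c j * \<beta> x d k * pd j (pd k (\<lambda>z. beta B z $ b $ p)) x)"
    by (simp add: mult_ac)
  have c: "(\<Sum>j\<in>UNIV. \<Sum>k\<in>UNIV. \<Sum>l\<in>UNIV. \<beta> x c j * (d\<beta> j d k x * \<beta> x b l * ?C k l)) = (\<Sum>k\<in>UNIV. \<Sum>l\<in>UNIV. D_beta c d k x * \<beta> x b l * christoffel G p k l x)"
  proof -
    have "(\<Sum>j\<in>UNIV. \<Sum>k\<in>UNIV. \<Sum>l\<in>UNIV. \<beta> x c j * (d\<beta> j d k x * \<beta> x b l * ?C k l))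
       = (\<Sum>k\<in>UNIV. \<Sum>l\<in>UNIV. \<Sum>j\<in>UNIV. \<beta> x c j * (d\<beta> j d k x * \<beta> x b l * ?C k l))"
      by (rule sum_rotate3)
    then show ?thesis unfolding D_beta_def by (simp add: sum_distrib_right sum_distrib_left mult_ac)
  qed
  have d: "(\<Sum>j\<in>UNIV. \<Sum>k\<in>UNIV. \<Sum>l\<in>UNIV. \<beta> x c j * (\<beta> x d k * d\<beta> j b l x * ?C k l)) = (\<Sum>k\<in>UNIV. \<Sum>l\<in>UNIV. \<beta> x d k * D_beta c b l x * christoffel G p k l x)"
  proof -
    have "(\<Sum>j\<in>UNIV. \<Sum>k\<in>UNIV. \<Sum>l\<in>UNIV. \<beta> x c j * (\<beta> x d k * d\<beta> j b l x * ?C k l))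
       = (\<Sum>k\<in>UNIV. \<Sum>l\<in>UNIV. \<Sum>j\<in>UNIV. \<beta> x c j * (\<beta> x d k * d\<beta> j b l x * ?C k l))"
      by (rule sum_rotate3)
    then show ?thesis unfolding D_beta_def by (simp add: sum_distrib_right sum_distrib_left mult_ac)
  qed
  have e: "(\<Sum>j\<in>UNIV. \<Sum>k\<in>UNIV. \<Sum>l\<in>UNIV. \<beta> x c j * (\<beta> x d k * \<beta> x b l * pd j (christoffel G p k l) x)) = frame_pd_christoffel c d b p x"
    unfolding frame_pd_christoffel_def by (simp add: mult_ac)
  show ?thesis unfolding exp a b c d e ..
qed

lemma cov_frame_conn_curvature:
  assumes x: "x \<in> U"
  shows "cov_frame_conn c d b p x - cov_frame_conn d c b p x - (\<Sum>m\<in>UNIV. Qf B m c d x * frame_conn m b p x)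
    = (\<Sum>j\<in>UNIV. \<Sum>k\<in>UNIV. \<Sum>l\<in>UNIV. \<beta> x c j * \<beta> x d k * \<beta> x b l * riemann G p l j k x)"
proof -
  let ?C = "\<lambda>k l. christoffel G p k l x"
  let ?dd = "\<lambda>j k. pd j (pd k (\<lambda>z. beta B z $ b $ p)) x"
  define E1 where "E1 c d = (\<Sum>k\<in>UNIV. D_beta c d k x * d\<beta> k b p x)" for c d
  define E2 where "E2 c d = (\<Sum>j\<in>UNIV. \<Sum>k\<in>UNIV. \<beta> x c j * \<beta> x d k * ?dd j k)" for c d
  define E3 where "E3 c d = (\<Sum>k\<in>UNIV. \<Sum>l\<in>UNIV. D_beta c d k x * \<beta> x b l * ?C k l)" for c d
  define E4 where "E4 c d = (\<Sum>k\<in>UNIV. \<Sum>l\<in>UNIV. \<beta> x d k * D_beta c b l x * ?C k l)" for c d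
  define E5 where "E5 c d = frame_pd_christoffel c d b p x" for c d
  define E6 where "E6 c d = (\<Sum>k\<in>UNIV. \<Sum>q\<in>UNIV. \<beta> x c k * ?C k q * D_beta d b q x)" for c d
  define E7 where "E7 c d = frame_christoffel_sq c d b p x" for c d
  have DopV: "Dop B c (frame_conn d b p) x = E1 c d + E2 c d + E3 c d + E4 c d + E5 c d" for c d
    unfolding E1_def E2_def E3_def E4_def E5_def by (rule Dop_frame_conn_eq[OF x])
  have W_E: "cov_frame_conn c d b p x = E1 c d + E2 c d + E3 c d + E4 c d + E5 c d + E6 c d + E7 c d" for c d
    unfolding cov_frame_conn_def DopV E6_def E7_def frame_christoffel_sq_def frame_conn_def by (simp add: distrib_left sum.distrib)
  have QV: "(\<Sum>m\<in>UNIV. Qf B m c d x * frame_conn m b p x) = E1 c d - E1 d c + (E3 c d - E3 d c)"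
  proof -
    have Vs: "frame_conn m b p x = (\<Sum>k\<in>UNIV. \<beta> x m k * (d\<beta> k b p x + (\<Sum>l\<in>UNIV. \<beta> x b l * ?C k l)))" for m
      unfolding frame_conn_def D_beta_def by (simp add: distrib_left sum.distrib sum_distrib_left mult_ac)
    have "(\<Sum>m\<in>UNIV. Qf B m c d x * frame_conn m b p x) =
        (\<Sum>k\<in>UNIV. (D_beta c d k x - D_beta d c k x) * (d\<beta> k b p x + (\<Sum>l\<in>UNIV. \<beta> x b l * ?C k l)))"
      unfolding Qf_eq_D_beta[OF x] Vs by (rule B_beta_contract[OF x])
    also have "\<dots> = E1 c d - E1 d c + (E3 c d - E3 d c)"
      unfolding E1_def E3_def
      by (simp add: algebra_simps sum.distrib sum_subtractf sum_distrib_left)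
    finally show ?thesis .
  qed
  have e2: "E2 c d = E2 d c"
  proof -
    have "E2 d c = (\<Sum>k\<in>UNIV. \<Sum>j\<in>UNIV. \<beta> x d j * \<beta> x c k * ?dd j k)" unfolding E2_def by (rule sum.swap)
    also have "\<dots> = E2 c d" unfolding E2_def
      by (intro sum.cong refl) (simp add: pd_pd_beta_swap[OF x] mult_ac)
    finally show ?thesis by simp
  qed
  have e46: "E4 c' d' = E6 d' c'" for c' d'
    unfolding E4_def E6_def by (simp add: mult_ac)
  show ?thesis unfolding riemann_frame_eq[OF x] W_E QV E5_def[symmetric] E7_def[symmetric] using e2 e46[of c d] e46[of d c] by linarith
qed


lemma ghat_low_congruence:
  assumes y: "y \<in> U"
  shows "transpose (beta B y) ** ghat_low G B y ** beta B y = Ginv G y"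
proof -
  have B_beta: "B y ** beta B y = mat 1" unfolding beta_def using matrix_inv_mult[OF B_invertible[OF y]] by simp
  have tt: "transpose (beta B y) ** transpose (B y) = mat 1"
    using B_beta by (metis matrix_transpose_mul transpose_mat)
  have "transpose (beta B y) ** ghat_low G B y ** beta B y
      = (transpose (beta B y) ** transpose (B y)) ** Ginv G y ** (B y ** beta B y)"
    unfolding ghat_low_eq[OF y] by (simp add: matrix_mul_assoc)
  then show ?thesis unfolding tt B_beta by simp
qed

lemma ghat_low_congruence_entry:
  assumes y: "y \<in> U"
  shows "(\<Sum>a\<in>UNIV. \<Sum>b\<in>UNIV. \<beta> y a l * ghat_low G B y $ a $ b * \<beta> y b k) = Gi y l k"
proof -
  have "Gi y l k = (transpose (beta B y) ** ghat_low G B y ** beta B y) $ l $ k" unfolding ghat_low_congruence[OF y] ..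
  also have "\<dots> = (\<Sum>b\<in>UNIV. \<Sum>a\<in>UNIV. \<beta> y a l * ghat_low G B y $ a $ b * \<beta> y b k)"
    by (simp add: matrix_mul_nth transpose_def sum_distrib_right)
  also have "\<dots> = (\<Sum>a\<in>UNIV. \<Sum>b\<in>UNIV. \<beta> y a l * ghat_low G B y $ a $ b * \<beta> y b k)" by (rule sum.swap)
  finally show ?thesis by simp
qed

lemma R_hat4_eq_riemann:
  assumes x: "x \<in> U"
  shows "R_hat4 G B a b c d x = (\<Sum>p\<in>UNIV. Bc x p a *
    (\<Sum>j\<in>UNIV. \<Sum>k\<in>UNIV. \<Sum>l\<in>UNIV. \<beta> x c j * \<beta> x d k * \<beta> x b l * riemann G p l j k x))"
  unfolding R_hat4_eq_cov_frame_conn[OF x] cov_frame_conn_curvature[OF x] ..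

lemma R_hat2_eq_ricci:
  assumes x: "x \<in> U"
  shows "R_hat2 G B a b x = (\<Sum>k\<in>UNIV. \<Sum>l\<in>UNIV. \<beta> x a l * \<beta> x b k * ricci G l k x)"
proof -
  have "R_hat2 G B a b x = (\<Sum>m\<in>UNIV. \<Sum>p\<in>UNIV. \<Sum>j\<in>UNIV. \<Sum>k\<in>UNIV. \<Sum>l\<in>UNIV.
        (Bc x p m * \<beta> x m j) * (\<beta> x b k * \<beta> x a l * riemann G p l j k x))"
    unfolding R_hat2_def R_hat4_eq_riemann[OF x] by (simp add: sum_distrib_left mult_ac)
  also have "\<dots> = (\<Sum>p\<in>UNIV. \<Sum>j\<in>UNIV. \<Sum>k\<in>UNIV. \<Sum>l\<in>UNIV. \<Sum>m\<in>UNIV.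
        (Bc x p m * \<beta> x m j) * (\<beta> x b k * \<beta> x a l * riemann G p l j k x))"
    by (rule sum_rotate4[where 'a='n and 'b='n and 'c='n and 'd='n, where f="\<lambda>m p j k. \<Sum>l\<in>UNIV. (Bc x p m * \<beta> x m j) * (\<beta> x b k * \<beta> x a l * riemann G p l j k x)", THEN trans])
       (intro sum.cong refl sum.swap)
  also have "\<dots> = (\<Sum>p\<in>UNIV. \<Sum>j\<in>UNIV. \<Sum>k\<in>UNIV. \<Sum>l\<in>UNIV. (if p = j then 1 else 0) * (\<beta> x b k * \<beta> x a l * riemann G p l j k x))"
    by (simp add: sum_distrib_right[symmetric] B_beta[OF x])
  also have "\<dots> = (\<Sum>p\<in>UNIV. \<Sum>j\<in>UNIV. (if p = j then 1 else 0) * (\<Sum>k\<in>UNIV. \<Sum>l\<in>UNIV. \<beta> x b k * \<beta> x a l * riemann G p l j k x))"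
    by (simp only: sum_distrib_left)
  also have "\<dots> = (\<Sum>p\<in>UNIV. \<Sum>k\<in>UNIV. \<Sum>l\<in>UNIV. \<beta> x b k * \<beta> x a l * riemann G p l p k x)"
    by (simp only: sum_delta_mult(1))
  also have "\<dots> = (\<Sum>k\<in>UNIV. \<Sum>l\<in>UNIV. \<Sum>p\<in>UNIV. \<beta> x b k * \<beta> x a l * riemann G p l p k x)"
    by (rule sum_rotate3)
  also have "\<dots> = (\<Sum>k\<in>UNIV. \<Sum>l\<in>UNIV. \<beta> x a l * \<beta> x b k * ricci G l k x)"
    unfolding ricci_def by (simp add: sum_distrib_left mult_ac)
  finally show ?thesis .
qed

lemma R_hat_eq_scalar_curv:
  assumes x: "x \<in> U"
  shows "R_hat G B x = scalar_curv G x"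
proof -
  have "R_hat G B x = (\<Sum>a\<in>UNIV. \<Sum>b\<in>UNIV. \<Sum>k\<in>UNIV. \<Sum>l\<in>UNIV. (\<beta> x a l * ghat_low G B x $ a $ b * \<beta> x b k) * ricci G l k x)"
    unfolding R_hat_def R_hat2_eq_ricci[OF x] by (simp add: sum_distrib_left mult_ac)
  also have "\<dots> = (\<Sum>k\<in>UNIV. \<Sum>l\<in>UNIV. \<Sum>a\<in>UNIV. \<Sum>b\<in>UNIV. (\<beta> x a l * ghat_low G B x $ a $ b * \<beta> x b k) * ricci G l k x)"
    by (rule sum_swap_pairs)
  also have "\<dots> = (\<Sum>k\<in>UNIV. \<Sum>l\<in>UNIV. Gi x l k * ricci G l k x)"
    by (simp add: sum_distrib_right[symmetric] ghat_low_congruence_entry[OF x])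
  also have "\<dots> = (\<Sum>l\<in>UNIV. \<Sum>k\<in>UNIV. Gi x l k * ricci G l k x)" by (rule sum.swap)
  finally show ?thesis by (simp add: scalar_curv_def)
qed

lemma ghat_low_D_eq_Ginv_pd:
  assumes x: "x \<in> U"
  shows "(\<Sum>a\<in>UNIV. \<Sum>b\<in>UNIV. ghat_low G B x $ a $ b * Dop B a phi x * Dop B b phi x)
    = (\<Sum>a\<in>UNIV. \<Sum>b\<in>UNIV. Gi x a b * pd a phi x * pd b phi x)"
proof -
  have "(\<Sum>a\<in>UNIV. \<Sum>b\<in>UNIV. ghat_low G B x $ a $ b * Dop B a phi x * Dop B b phi x)
     = (\<Sum>a\<in>UNIV. \<Sum>b\<in>UNIV. \<Sum>i\<in>UNIV. \<Sum>j\<in>UNIV. (\<beta> x a i * ghat_low G B x $ a $ b * \<beta> x b j) * (pd i phi x * pd j phi x))"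
    unfolding Dop_def by (simp add: sum_distrib_left sum_distrib_right mult_ac)
  also have "\<dots> = (\<Sum>i\<in>UNIV. \<Sum>j\<in>UNIV. \<Sum>a\<in>UNIV. \<Sum>b\<in>UNIV. (\<beta> x a i * ghat_low G B x $ a $ b * \<beta> x b j) * (pd i phi x * pd j phi x))"
    by (rule sum_swap_pairs)
  also have "\<dots> = (\<Sum>i\<in>UNIV. \<Sum>j\<in>UNIV. Gi x i j * (pd i phi x * pd j phi x))"
    by (simp add: sum_distrib_right[symmetric] ghat_low_congruence_entry[OF x])
  finally show ?thesis by (simp add: mult_ac)
qed

lemma beta_pd_beta_eq_pd_B:
  assumes y: "y \<in> U"
  shows "(\<Sum>m\<in>UNIV. \<beta> y a m * d\<beta> m b c y) = (\<Sum>i\<in>UNIV. \<Sum>j\<in>UNIV. \<Sum>k\<in>UNIV. \<beta> y a i * \<beta> y b j * \<beta> y c k * dB i j k y)"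
proof -
  have "(\<Sum>m\<in>UNIV. \<beta> y a m * d\<beta> m b c y) = (\<Sum>m\<in>UNIV. \<Sum>p\<in>UNIV. \<Sum>q\<in>UNIV. \<beta> y a m * (\<beta> y b p * dB m p q y * (- \<beta> y q c)))"
    unfolding pd_beta[OF y] by (simp add: sum_distrib_left sum_negf)
  also have "\<dots> = (\<Sum>i\<in>UNIV. \<Sum>j\<in>UNIV. \<Sum>k\<in>UNIV. \<beta> y a i * \<beta> y b j * \<beta> y c k * dB i j k y)"
    by (intro sum.cong refl) (simp add: beta_skew[OF y, of _ c] mult_ac)
  finally show ?thesis .
qed

lemma Theta_up_eq_Hlow:
  assumes y: "y \<in> U"
  shows "Theta_up B a b c y = (\<Sum>i\<in>UNIV. \<Sum>j\<in>UNIV. \<Sum>k\<in>UNIV. \<beta> y a i * \<beta> y b j * \<beta> y c k * Hlow B i j k y)"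
proof -
  have t: "Theta_up B a b c y = (\<Sum>m\<in>UNIV. \<beta> y a m * d\<beta> m b c y) + (\<Sum>m\<in>UNIV. \<beta> y b m * d\<beta> m c a y) + (\<Sum>m\<in>UNIV. \<beta> y c m * d\<beta> m a b y)"
    unfolding Theta_up_def by (simp add: sum.distrib)
  have t2: "(\<Sum>m\<in>UNIV. \<beta> y b m * d\<beta> m c a y) = (\<Sum>i\<in>UNIV. \<Sum>j\<in>UNIV. \<Sum>k\<in>UNIV. \<beta> y a i * \<beta> y b j * \<beta> y c k * dB j k i y)"
  proof -
    have "(\<Sum>m\<in>UNIV. \<beta> y b m * d\<beta> m c a y) = (\<Sum>i\<in>UNIV. \<Sum>j\<in>UNIV. \<Sum>k\<in>UNIV. \<beta> y b i * \<beta> y c j * \<beta> y a k * dB i j k y)"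
      by (rule beta_pd_beta_eq_pd_B[OF y])
    also have "\<dots> = (\<Sum>k\<in>UNIV. \<Sum>i\<in>UNIV. \<Sum>j\<in>UNIV. \<beta> y b i * \<beta> y c j * \<beta> y a k * dB i j k y)"
      by (rule sum_rotate3[symmetric])
    finally show ?thesis by (simp add: mult_ac)
  qed
  have t3: "(\<Sum>m\<in>UNIV. \<beta> y c m * d\<beta> m a b y) = (\<Sum>i\<in>UNIV. \<Sum>j\<in>UNIV. \<Sum>k\<in>UNIV. \<beta> y a i * \<beta> y b j * \<beta> y c k * dB k i j y)"
  proof -
    have "(\<Sum>m\<in>UNIV. \<beta> y c m * d\<beta> m a b y) = (\<Sum>i\<in>UNIV. \<Sum>j\<in>UNIV. \<Sum>k\<in>UNIV. \<beta> y c i * \<beta> y a j * \<beta> y b k * dB i j k y)"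
      by (rule beta_pd_beta_eq_pd_B[OF y])
    also have "\<dots> = (\<Sum>j\<in>UNIV. \<Sum>k\<in>UNIV. \<Sum>i\<in>UNIV. \<beta> y c i * \<beta> y a j * \<beta> y b k * dB i j k y)"
      by (rule sum_rotate3)
    finally show ?thesis by (simp add: mult_ac)
  qed
  show ?thesis unfolding t t2 t3 unfolding beta_pd_beta_eq_pd_B[OF y] Hlow_def by (simp add: distrib_left sum.distrib)
qed

lemma Theta_sq_eq_Hsq:
  assumes x: "x \<in> U"
  shows "Theta_sq G B x = Hsq G B x"
  unfolding Theta_sq_def Hsq_def Hup_def
  by (rule tensor3_contraction_congruence[where P = "\<lambda>a i. \<beta> x a i" and M = "\<lambda>a b. ghat_low G B x $ a $ b" and S = "\<lambda>i j k. Hlow B i j k x",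
       OF Theta_up_eq_Hlow[OF x] Theta_low_def ghat_low_congruence_entry[OF x]])


lemma density_factor_eq:
  assumes x: "x \<in> U" and dB: "det (B x) > 0"
  shows "sqrt (- det (ghat_up G B x)) * det (matrix_inv (beta B x)) = sqrt (- det (G x))"
proof -
  have beta_B: "beta B x ** B x = mat 1" and B_beta: "B x ** beta B x = mat 1"
    unfolding beta_def using matrix_inv_mult[OF B_invertible[OF x]] by simp_all
  have ib: "invertible (beta B x)" using beta_B invertible_right_inverse by blast
  have mi: "matrix_inv (beta B x) = B x" by (rule matrix_inv_unique_right[OF ib beta_B])
  have "det (B x ** beta B x) = 1" using B_beta by simp
  then have d1: "det (B x) * det (beta B x) = 1" by (simp add: det_mul)
  have "det (ghat_up G B x) = det (beta B x) ^ 2 * det (G x)"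
    unfolding ghat_up_eq_congruence by (simp add: det_mul power2_eq_square)
  then have "- det (ghat_up G B x) = det (beta B x) ^ 2 * (- det (G x))" by simp
  then have sq: "sqrt (- det (ghat_up G B x)) = \<bar>det (beta B x)\<bar> * sqrt (- det (G x))"
    by (simp only: real_sqrt_mult real_sqrt_abs)
  have one: "\<bar>det (beta B x)\<bar> * det (B x) = 1"
  proof -
    have "det (beta B x) = 1 / det (B x)" using d1 dB by (simp add: field_simps)
    then have "det (beta B x) > 0" using dB by simp
    then show ?thesis using d1 by (simp add: mult.commute)
  qed
  have "sqrt (- det (ghat_up G B x)) * det (B x) = sqrt (- det (G x)) * (\<bar>det (beta B x)\<bar> * det (B x))"
    unfolding sq by (simp only: mult_ac)
  then show ?thesis unfolding mi one by simp
qed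

end


theorem mainTheorem5:
  fixes U :: "(real^'n::finite) set"
    and G B :: "real^'n \<Rightarrow> real^'n^'n"
    and phi :: "real^'n \<Rightarrow> real"
    and x :: "real^'n"
  assumes "even CARD('n)"
    and "open U"
    and "\<forall>y\<in>U. lorentzian (G y)"
    and "\<forall>a b. smooth_on U (\<lambda>y. G y $ a $ b)"
    and "\<forall>y\<in>U. \<forall>a b. B y $ a $ b = - B y $ b $ a"
    and "\<forall>y\<in>U. invertible (B y)"
    and "\<forall>a b. smooth_on U (\<lambda>y. B y $ a $ b)"
    and "smooth_on U phi"
    and "x \<in> U"
  shows "sqrt (- det (G x)) * exp (-2 * phi x) *
           (scalar_curv G x - (1/12) * Hsq G B x
            + 4 * (\<Sum>a\<in>UNIV. \<Sum>b\<in>UNIV. Ginv G x $ a $ b * pd a phi x * pd b phi x))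
       = sqrt (- det (ghat_up G B x)) * det (matrix_inv (beta B x)) * exp (-2 * phi x) *
           (R_hat G B x - (1/12) * Theta_sq G B x
            + 4 * (\<Sum>a\<in>UNIV. \<Sum>b\<in>UNIV. ghat_low G B x $ a $ b * Dop B a phi x * Dop B b phi x))"
proof -
  interpret metric_bivector U G B
  proof
    fix y a b k
    assume "y \<in> U"
    then show "invertible (G y)" "G y $ a $ b = G y $ b $ a"
      using assms(3) lorentzian_invertible lorentzian_symmetric by blast+
    show "(\<lambda>z. G z $ a $ b) differentiable at y" "pd k (\<lambda>z. G z $ a $ b) differentiable at y"
      using smooth_on_differentiable assms(2,4) \<open>y \<in> U\<close> by blast+
    show "invertible (B y)" "B y $ a $ b = - B y $ b $ a"
      using assms(5,6) \<open>y \<in> U\<close> by blast+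
    show "(\<lambda>z. B z $ a $ b) differentiable at y" "pd k (\<lambda>z. B z $ a $ b) differentiable at y"
      using smooth_on_differentiable assms(2,7) \<open>y \<in> U\<close> by blast+
  qed fact
  have "det (B x) > 0"
    using assms(5,6,9) by (blast intro: det_pos_if_skew_invertible)
  then show ?thesis
    using assms(9)
    by (simp only: R_hat_eq_scalar_curv Theta_sq_eq_Hsq ghat_low_D_eq_Ginv_pd density_factor_eq)
qed

end
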